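(* For every nonnegative integer $p$, let $\mathfrak s\subset\mathfrak{sp}(V^{\mathfrak{sp}}_{p;2p})$ be an $\mathfrak{sl}_2$-subalgebra containing $\delta^{\mathfrak{sp}}_{p;2p}$, spanned by elements of degrees $-1,0,1$, for which $E=\operatorname{span}\{e_i\}$ and $F=\operatorname{span}\{f_i\}$ are irreducible submodules. Then the maximal $\operatorname{ad}\mathfrak s$-submodule $\mathfrak l^{\mathfrak{sp}}(V^{\mathfrak{sp}}_{p;2p})$ of $\mathfrak{sp}(V^{\mathfrak{sp}}_{p;2p})$ contained in the nonnegative-degree part is a Lie subalgebra isomorphic to $\mathfrak{sl}_2$. Moreover, for every $m\in\frac12\mathbb Z_{\rm odd}$, $m>0$, and the analogous $\mathfrak{sl}_2$-subalgebra of $\mathfrak{sp}(\mathcal L^{\mathfrak{sp}}_m)$ containing $\tau^{\mathfrak{sp}}_m$ (acting irreducibly), the corresponding maximal submodule $\mathfrak l^{\mathfrak{sp}}(\mathcal L^{\mathfrak{sp}}_m)$ is $0$.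
   Context: $V^{\mathfrak{sp}}_{p;2p}$ is the symplectic space with basis $e_{-p},\dots,e_p,f_{-p},\dots,f_p$ (index $=$ degree), $\sigma(e_i,e_j)=\sigma(f_i,f_j)=0$, $\sigma(e_i,f_j)=(-1)^{p-i}$ if $j=-i$ and $0$ otherwise; $\delta^{\mathfrak{sp}}_{p;2p}(e_i)=e_{i-1}$, $\delta^{\mathfrak{sp}}_{p;2p}(f_i)=f_{i-1}$ for $i>-p$, $\delta^{\mathfrak{sp}}_{p;2p}(e_{-p})=\delta^{\mathfrak{sp}}_{p;2p}(f_{-p})=0$. $\frac12\mathbb Z_{\rm odd}=\{i+\frac12:i\in\mathbb Z\}$; $\mathcal L^{\mathfrak{sp}}_m=\bigoplus_{i\in\frac12\mathbb Z_{\rm odd},|i|\le m}E_i$ with $\dim E_i=1$ in degree $i$, a symplectic space with $\sigma(E_i,E_j)=0$ unless $i+j=0$, and $\tau^{\mathfrak{sp}}_m\in\mathfrak{sp}(\mathcal L^{\mathfrak{sp}}_m)$ maps $E_i$ onto $E_{i-1}$ ($i>-m$) and $E_{-m}$ to $0$. Gradings on endomorphism spaces: degree-$k$ maps send degree-$i$ vectors to degree $i+k$. *)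

theory Defs
  imports Complex_Main
begin

text \<open>Endomorphisms of a finite-dimensional space with basis indexed by a finite set I
  are represented by matrices X :: 'i => 'i => complex, where X b a is the coefficient of
  the basis vector b in the image of the basis vector a; entries outside I x I are 0.
  Vectors are functions 'i => complex vanishing outside I.\<close>

definition mzero :: "'i \<Rightarrow> 'i \<Rightarrow> complex" where
  "mzero = (\<lambda>b a. 0)"

definition madd :: "('i \<Rightarrow> 'i \<Rightarrow> complex) \<Rightarrow> ('i \<Rightarrow> 'i \<Rightarrow> complex) \<Rightarrow> 'i \<Rightarrow> 'i \<Rightarrow> complex" where
  "madd X Y = (\<lambda>b a. X b a + Y b a)"

definition msc :: "complex \<Rightarrow> ('i \<Rightarrow> 'i \<Rightarrow> complex) \<Rightarrow> 'i \<Rightarrow> 'i \<Rightarrow> complex" where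
  "msc c X = (\<lambda>b a. c * X b a)"

definition mmul :: "'i set \<Rightarrow> ('i \<Rightarrow> 'i \<Rightarrow> complex) \<Rightarrow> ('i \<Rightarrow> 'i \<Rightarrow> complex) \<Rightarrow> 'i \<Rightarrow> 'i \<Rightarrow> complex" where
  "mmul I X Y = (\<lambda>b a. \<Sum>c\<in>I. X b c * Y c a)"

definition brk :: "'i set \<Rightarrow> ('i \<Rightarrow> 'i \<Rightarrow> complex) \<Rightarrow> ('i \<Rightarrow> 'i \<Rightarrow> complex) \<Rightarrow> 'i \<Rightarrow> 'i \<Rightarrow> complex" where
  "brk I X Y = (\<lambda>b a. mmul I X Y b a - mmul I Y X b a)"

definition mat_on :: "'i set \<Rightarrow> ('i \<Rightarrow> 'i \<Rightarrow> complex) \<Rightarrow> bool" where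
  "mat_on I X \<longleftrightarrow> (\<forall>a b. a \<notin> I \<or> b \<notin> I \<longrightarrow> X b a = 0)"

definition msubspace :: "'i set \<Rightarrow> ('i \<Rightarrow> 'i \<Rightarrow> complex) set \<Rightarrow> bool" where
  "msubspace I M \<longleftrightarrow> M \<subseteq> {X. mat_on I X} \<and> mzero \<in> M \<and>
     (\<forall>X\<in>M. \<forall>Y\<in>M. madd X Y \<in> M) \<and> (\<forall>c. \<forall>X\<in>M. msc c X \<in> M)"

definition lie_sub :: "'i set \<Rightarrow> ('i \<Rightarrow> 'i \<Rightarrow> complex) set \<Rightarrow> bool" where
  "lie_sub I M \<longleftrightarrow> msubspace I M \<and> (\<forall>X\<in>M. \<forall>Y\<in>M. brk I X Y \<in> M)"

definition sl2_set :: "(nat \<Rightarrow> nat \<Rightarrow> complex) set" where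
  "sl2_set = {A. mat_on {0,1} A \<and> A 0 0 + A 1 1 = 0}"

definition iso_sl2 :: "'i set \<Rightarrow> ('i \<Rightarrow> 'i \<Rightarrow> complex) set \<Rightarrow> bool" where
  "iso_sl2 I M \<longleftrightarrow> (\<exists>\<phi>. bij_betw \<phi> sl2_set M \<and>
     (\<forall>A\<in>sl2_set. \<forall>B\<in>sl2_set. \<phi> (madd A B) = madd (\<phi> A) (\<phi> B) \<and>
         \<phi> (brk {0,1} A B) = brk I (\<phi> A) (\<phi> B)) \<and>
     (\<forall>c. \<forall>A\<in>sl2_set. \<phi> (msc c A) = msc c (\<phi> A)))"

text \<open>sp(V,\<sigma>) where S a b = \<sigma>(basis a, basis b).\<close>
definition sp_set :: "'i set \<Rightarrow> ('i \<Rightarrow> 'i \<Rightarrow> complex) \<Rightarrow> ('i \<Rightarrow> 'i \<Rightarrow> complex) set" where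
  "sp_set I S = {X. mat_on I X \<and>
     (\<forall>a\<in>I. \<forall>b\<in>I. (\<Sum>c\<in>I. X c a * S c b) + (\<Sum>c\<in>I. S a c * X c b) = 0)}"

definition homog :: "('i \<Rightarrow> real) \<Rightarrow> real \<Rightarrow> ('i \<Rightarrow> 'i \<Rightarrow> complex) \<Rightarrow> bool" where
  "homog deg k X \<longleftrightarrow> (\<forall>a b. X b a \<noteq> 0 \<longrightarrow> deg b = deg a + k)"

definition nonneg :: "('i \<Rightarrow> real) \<Rightarrow> ('i \<Rightarrow> 'i \<Rightarrow> complex) \<Rightarrow> bool" where
  "nonneg deg X \<longleftrightarrow> (\<forall>a b. X b a \<noteq> 0 \<longrightarrow> deg a \<le> deg b)"

definition graded_sl2_sub :: "'i set \<Rightarrow> ('i \<Rightarrow> real) \<Rightarrow> ('i \<Rightarrow> 'i \<Rightarrow> complex) \<Rightarrow>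
    ('i \<Rightarrow> 'i \<Rightarrow> complex) set \<Rightarrow> bool" where
  "graded_sl2_sub I deg S s \<longleftrightarrow> lie_sub I s \<and> s \<subseteq> sp_set I S \<and> iso_sl2 I s \<and>
     (\<forall>X\<in>s. \<exists>A\<in>s. \<exists>B\<in>s. \<exists>C\<in>s. homog deg (-1) A \<and> homog deg 0 B \<and> homog deg 1 C \<and>
        X = madd A (madd B C))"

definition vsubspace :: "'i set \<Rightarrow> ('i \<Rightarrow> complex) set \<Rightarrow> bool" where
  "vsubspace I W \<longleftrightarrow> W \<subseteq> {v. \<forall>a. a \<notin> I \<longrightarrow> v a = 0} \<and> (\<lambda>_. 0) \<in> W \<and>
     (\<forall>v\<in>W. \<forall>w\<in>W. (\<lambda>a. v a + w a) \<in> W) \<and> (\<forall>c. \<forall>v\<in>W. (\<lambda>a. c * v a) \<in> W)"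

definition mapp :: "'i set \<Rightarrow> ('i \<Rightarrow> 'i \<Rightarrow> complex) \<Rightarrow> ('i \<Rightarrow> complex) \<Rightarrow> 'i \<Rightarrow> complex" where
  "mapp I X v = (\<lambda>b. \<Sum>a\<in>I. X b a * v a)"

definition invariant :: "'i set \<Rightarrow> ('i \<Rightarrow> 'i \<Rightarrow> complex) set \<Rightarrow> ('i \<Rightarrow> complex) set \<Rightarrow> bool" where
  "invariant I s W \<longleftrightarrow> (\<forall>X\<in>s. \<forall>v\<in>W. mapp I X v \<in> W)"

definition irreducible_sub :: "'i set \<Rightarrow> ('i \<Rightarrow> 'i \<Rightarrow> complex) set \<Rightarrow> ('i \<Rightarrow> complex) set \<Rightarrow> bool" where
  "irreducible_sub I s W \<longleftrightarrow> vsubspace I W \<and> invariant I s W \<and> W \<noteq> {\<lambda>_. 0} \<and>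
     (\<forall>U. vsubspace I U \<and> invariant I s U \<and> U \<subseteq> W \<longrightarrow> U = {\<lambda>_. 0} \<or> U = W)"

text \<open>The maximal ad s-submodule of sp(V) contained in the nonnegative-degree part
  (the union of all such submodules, which is their sum and hence itself the greatest one).\<close>
definition lmax :: "'i set \<Rightarrow> ('i \<Rightarrow> real) \<Rightarrow> ('i \<Rightarrow> 'i \<Rightarrow> complex) \<Rightarrow>
    ('i \<Rightarrow> 'i \<Rightarrow> complex) set \<Rightarrow> ('i \<Rightarrow> 'i \<Rightarrow> complex) set" where
  "lmax I deg S s = \<Union>{M. msubspace I M \<and> M \<subseteq> sp_set I S \<inter> {X. nonneg deg X} \<and>
       (\<forall>Y\<in>s. \<forall>X\<in>M. brk I Y X \<in> M)}"

text \<open>V^sp_{p;2p}: basis index (False,i) = e_i, (True,i) = f_i, |i| <= p; degree = i.\<close>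
definition Vidx :: "nat \<Rightarrow> (bool \<times> int) set" where
  "Vidx p = {(b, i). \<bar>i\<bar> \<le> int p}"

definition Vdeg :: "bool \<times> int \<Rightarrow> real" where
  "Vdeg x = real_of_int (snd x)"

definition Vform :: "nat \<Rightarrow> bool \<times> int \<Rightarrow> bool \<times> int \<Rightarrow> complex" where
  "Vform p x y = (if x \<in> Vidx p \<and> y \<in> Vidx p \<and> snd y = - snd x then
      (if \<not> fst x \<and> fst y then (-1) ^ nat (int p - snd x)
       else if fst x \<and> \<not> fst y then - ((-1) ^ nat (int p - snd y))
       else 0)
     else 0)"

definition Vdelta :: "nat \<Rightarrow> bool \<times> int \<Rightarrow> bool \<times> int \<Rightarrow> complex" where
  "Vdelta p y x = (if fst y = fst x \<and> snd y = snd x - 1 \<and> - int p < snd x \<and> snd x \<le> int p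
     then 1 else 0)"

definition Espace :: "nat \<Rightarrow> (bool \<times> int \<Rightarrow> complex) set" where
  "Espace p = {v. (\<forall>x. x \<notin> Vidx p \<longrightarrow> v x = 0) \<and> (\<forall>i. v (True, i) = 0)}"

definition Fspace :: "nat \<Rightarrow> (bool \<times> int \<Rightarrow> complex) set" where
  "Fspace p = {v. (\<forall>x. x \<notin> Vidx p \<longrightarrow> v x = 0) \<and> (\<forall>i. v (False, i) = 0)}"

text \<open>L^sp_m: basis E_i indexed by i in (1/2)Z_odd with |i| <= m; degree = i.\<close>
definition halfodd :: "real set" where
  "halfodd = {real_of_int i + 1/2 | i. True}"

definition Lidx :: "real \<Rightarrow> real set" where
  "Lidx m = {i. i \<in> halfodd \<and> \<bar>i\<bar> \<le> m}"

definition nondeg :: "'i set \<Rightarrow> ('i \<Rightarrow> 'i \<Rightarrow> complex) \<Rightarrow> bool" where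
  "nondeg I S \<longleftrightarrow> (\<forall>v. (\<forall>b\<in>I. (\<Sum>a\<in>I. v a * S a b) = 0) \<longrightarrow> (\<forall>a\<in>I. v a = 0))"

definition Lform_ok :: "real \<Rightarrow> (real \<Rightarrow> real \<Rightarrow> complex) \<Rightarrow> bool" where
  "Lform_ok m S \<longleftrightarrow> mat_on (Lidx m) S \<and> (\<forall>a b. S a b = - S b a) \<and>
     (\<forall>a b. S a b \<noteq> 0 \<longrightarrow> a + b = 0) \<and> nondeg (Lidx m) S"

definition Ltau_ok :: "real \<Rightarrow> (real \<Rightarrow> real \<Rightarrow> complex) \<Rightarrow> bool" where
  "Ltau_ok m \<tau> \<longleftrightarrow> mat_on (Lidx m) \<tau> \<and> (\<forall>a b. \<tau> b a \<noteq> 0 \<longrightarrow> b = a - 1) \<and>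
     (\<forall>a\<in>Lidx m. a > - m \<longrightarrow> \<tau> (a - 1) a \<noteq> 0)"

end

theory Submission
  imports Defs
begin

(*
  Both halves of the theorem rest on two facts about sl_2:

  (1) Highest weight argument (sl2_triple.degree_zero_of_nonneg_submodule): if D and E
      have degrees -1 and 1, [E,D] acts on degree-k matrices by 2k and the grading is
      bounded and integral, then a subspace stable under ad D and ad E inside the
      nonnegative part consists of degree-0 matrices.
  (2) the brackets of sl_2 do not lie on a line (sl2_brackets_not_in_line); hence a
      graded sl_2-subalgebra whose degree -1 part is a line and whose degree 0 part is
      diagonal has a nonzero element of degree 1 (graded_sl2_has_degree_one).

  For V_{p;2p}, invariance of E and F makes every element of s preserve both halves; the
  degree -1 part of s is spanned by delta, the degree 1 part by an explicit raising operator
  Eop (a second-difference computation), and lmax turns out to be the copy of sl_2 acting on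
  the multiplicity space span{e_i, f_i}.  For L_m, the degree 1 part yields a raising
  operator e with [e,tau] a weight operator, so by (1) lmax lies in degree 0; commuting with
  tau forces scalars, and sp contains no nonzero scalars, so lmax = 0.
*)

lemma sum_single:
  assumes "finite I" "\<And>c. c \<in> I \<Longrightarrow> c \<noteq> z \<Longrightarrow> f c = 0"
  shows "(\<Sum>c\<in>I. f c) = (if z \<in> I then f z else 0)"
proof -
  have "(\<Sum>c\<in>I. f c) = (\<Sum>c\<in>I. if c = z then f c else 0)"
    using assms(2) by (intro sum.cong) auto
  also have "\<dots> = (if z \<in> I then f z else 0)"
    using assms(1) by (simp add: sum.delta)
  finally show ?thesis .
qed

text \<open>Every "propagate along a chain of basis vectors" argument below reduces
  to this (with step 0 it says that the sequence is constant).\<close>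
lemma arith_progression_nat:
  fixes f :: "nat \<Rightarrow> complex"
  assumes step: "\<And>k. k < n \<Longrightarrow> f (Suc k) = f k + c" and "k \<le> n"
  shows "f k = f 0 + of_nat k * c"
  using assms(2) by (induction k) (auto simp: step algebra_simps)

lemma arith_progression_int:
  fixes f :: "int \<Rightarrow> complex"
  assumes step: "\<And>i. lo < i \<Longrightarrow> i \<le> hi \<Longrightarrow> f i = f (i - 1) + c"
    and i: "lo \<le> i" "i \<le> hi"
  shows "f i = f lo + of_int (i - lo) * c"
proof -
  have "f (lo + int k) = f (lo + int 0) + of_nat k * c" if "k \<le> nat (hi - lo)" for k
  proof (rule arith_progression_nat[of "nat (hi - lo)"])
    fix k assume "k < nat (hi - lo)"
    then show "f (lo + int (Suc k)) = f (lo + int k) + c"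
      using step[of "lo + int (Suc k)"] by simp
  qed (use that in simp)
  from this[of "nat (i - lo)"] i show ?thesis by simp
qed

text \<open>This computes the degree-one elements of the sl_2-subalgebras below:
  g is their subdiagonal and beta the diagonal of their bracket with the lowering operator.\<close>
lemma second_difference_chain:
  fixes g \<beta> :: "int \<Rightarrow> complex"
  assumes \<beta>_def: "\<And>i. lo \<le> i \<Longrightarrow> i \<le> hi \<Longrightarrow> \<beta> i = g (i - 1) - g i"
    and \<beta>_step: "\<And>i. lo < i \<Longrightarrow> i \<le> hi \<Longrightarrow> \<beta> (i - 1) - \<beta> i = \<kappa>"
    and lower: "g (lo - 1) = 0" and upper: "g hi = 0" and "lo \<le> hi"
    and i: "lo - 1 \<le> i" "i \<le> hi"
  shows "g i = - \<kappa> / 2 * of_int ((hi - i) * (i - lo + 1))"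
proof -
  define Q where "Q i = - \<kappa> / 2 * of_int ((hi - i) * (i - lo + 1))" for i
  have Q_step: "Q (i - 1) = Q i + (- \<kappa> * of_int i + \<kappa> * of_int (lo + hi) / 2)" for i
    by (simp add: Q_def field_simps)
  define \<gamma> where "\<gamma> = \<beta> lo + \<kappa> * of_int lo - \<kappa> * of_int (lo + hi) / 2"
  have \<beta>_lin: "\<beta> i + \<kappa> * of_int i = \<beta> lo + \<kappa> * of_int lo" if "lo \<le> i" "i \<le> hi" for i
    using arith_progression_int[where f="\<lambda>i. \<beta> i + \<kappa> * of_int i" and c=0, OF _ that]
      \<beta>_step by (force simp: algebra_simps)
  have d_step: "g i - Q i = (g (i - 1) - Q (i - 1)) + (- \<gamma>)" if "lo - 1 < i" "i \<le> hi" for i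
  proof -
    have "lo \<le> i" using that by simp
    have "\<beta> i = \<beta> lo + \<kappa> * of_int lo - \<kappa> * of_int i"
      using \<beta>_lin[OF \<open>lo \<le> i\<close> that(2)] by (simp add: eq_diff_eq)
    then have g_step: "g (i - 1) = g i + (\<beta> lo + \<kappa> * of_int lo - \<kappa> * of_int i)"
      using \<beta>_def[OF \<open>lo \<le> i\<close> that(2)] by (metis diff_eq_eq add.commute)
    show ?thesis unfolding g_step Q_step \<gamma>_def by (simp add: field_simps)
  qed
  have d: "g i - Q i = of_int (i - (lo - 1)) * (- \<gamma>)" if "lo - 1 \<le> i" "i \<le> hi" for i
    using arith_progression_int[where f="\<lambda>i. g i - Q i", OF d_step that] lower
    by (simp add: Q_def)
  have "of_int (hi - (lo - 1)) * (- \<gamma>) = 0"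
    using d[of hi] upper \<open>lo \<le> hi\<close> by (simp add: Q_def)
  moreover have "hi - (lo - 1) \<noteq> 0" using \<open>lo \<le> hi\<close> by simp
  then have "(of_int (hi - (lo - 1)) :: complex) \<noteq> 0" by (simp only: of_int_eq_0_iff not_False_eq_True)
  ultimately have "\<gamma> = 0" by simp
  then have "g i - Q i = 0" using d[OF i] by simp
  then show ?thesis unfolding Q_def[symmetric] by simp
qed

lemma mmul_diff_right:
  "mmul I X (\<lambda>b a. P b a - Q b a) = (\<lambda>b a. mmul I X P b a - mmul I X Q b a)"
  by (simp add: mmul_def fun_eq_iff right_diff_distrib sum_subtractf)

lemma mmul_diff_left:
  "mmul I (\<lambda>b a. P b a - Q b a) X = (\<lambda>b a. mmul I P X b a - mmul I Q X b a)"
  by (simp add: mmul_def fun_eq_iff left_diff_distrib sum_subtractf)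

lemma mmul_assoc:
  assumes "finite I"
  shows "mmul I (mmul I X Y) Z = mmul I X (mmul I Y Z)"
proof -
  have "(\<Sum>c\<in>I. (\<Sum>d\<in>I. X b d * Y d c) * Z c a) = (\<Sum>d\<in>I. X b d * (\<Sum>c\<in>I. Y d c * Z c a))"
    for a b
  proof -
    have "(\<Sum>c\<in>I. (\<Sum>d\<in>I. X b d * Y d c) * Z c a) = (\<Sum>c\<in>I. \<Sum>d\<in>I. X b d * Y d c * Z c a)"
      by (simp add: sum_distrib_right)
    also have "\<dots> = (\<Sum>d\<in>I. \<Sum>c\<in>I. X b d * Y d c * Z c a)"
      by (rule sum.swap)
    also have "\<dots> = (\<Sum>d\<in>I. X b d * (\<Sum>c\<in>I. Y d c * Z c a))"
      by (simp add: sum_distrib_left mult.assoc)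
    finally show ?thesis .
  qed
  then show ?thesis unfolding mmul_def by (simp add: fun_eq_iff)
qed

lemma jacobi:
  assumes "finite I"
  shows "brk I X (brk I Y Z) = madd (brk I (brk I X Y) Z) (brk I Y (brk I X Z))"
  unfolding brk_def madd_def mmul_diff_right mmul_diff_left mmul_assoc[OF assms]
  by (simp add: fun_eq_iff algebra_simps)

lemma brk_madd_left: "brk I (madd X Y) Z = madd (brk I X Z) (brk I Y Z)"
  by (simp add: brk_def madd_def mmul_def fun_eq_iff algebra_simps sum.distrib)

lemma brk_madd_right: "brk I Z (madd X Y) = madd (brk I Z X) (brk I Z Y)"
  by (simp add: brk_def madd_def mmul_def fun_eq_iff algebra_simps sum.distrib)

lemma brk_msc_left: "brk I (msc c X) Z = msc c (brk I X Z)"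
  by (simp add: brk_def msc_def mmul_def fun_eq_iff algebra_simps sum_distrib_left)

lemma brk_msc_right: "brk I Z (msc c X) = msc c (brk I Z X)"
  by (simp add: brk_def msc_def mmul_def fun_eq_iff algebra_simps sum_distrib_left)

lemma brk_self: "brk I X X = mzero"
  by (simp add: brk_def mzero_def fun_eq_iff)

lemma brk_antisym: "brk I X Y = msc (-1) (brk I Y X)"
  by (simp add: brk_def msc_def fun_eq_iff)

lemma brk_mzero [simp]: "brk I X mzero = mzero" "brk I mzero X = mzero"
  by (simp_all add: brk_def mzero_def mmul_def fun_eq_iff)

lemma msc_mzero [simp]: "msc c mzero = mzero"
  by (simp add: msc_def mzero_def fun_eq_iff)

lemma madd_mzero [simp]: "madd mzero X = X" "madd X mzero = X"
  by (simp_all add: madd_def mzero_def fun_eq_iff)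

lemma msc_madd: "madd (msc c X) (msc d X) = msc (c + d) X"
  by (simp add: msc_def madd_def fun_eq_iff algebra_simps)

lemma msc_eq_mzero: "msc c X = mzero \<longleftrightarrow> c = 0 \<or> X = mzero"
  by (auto simp add: msc_def mzero_def fun_eq_iff)

lemma mat_onD: "mat_on I X \<Longrightarrow> X b a \<noteq> 0 \<Longrightarrow> a \<in> I \<and> b \<in> I"
  by (auto simp: mat_on_def)

lemma mat_on_brk: "mat_on I X \<Longrightarrow> mat_on I Y \<Longrightarrow> mat_on I (brk I X Y)"
  unfolding mat_on_def brk_def mmul_def by auto

lemma mat_on_iter: "mat_on I Y \<Longrightarrow> mat_on I X \<Longrightarrow> mat_on I ((brk I Y ^^ r) X)"
  by (induction r) (auto simp add: mat_on_brk)

lemma homog_brk: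
  assumes "homog deg k X" "homog deg l Y"
  shows "homog deg (k + l) (brk I X Y)"
  unfolding homog_def
proof (intro allI impI)
  fix a b assume nz: "brk I X Y b a \<noteq> 0"
  show "deg b = deg a + (k + l)"
  proof (rule ccontr)
    assume ne: "deg b \<noteq> deg a + (k + l)"
    have "\<And>c. X b c * Y c a = 0" "\<And>c. Y b c * X c a = 0"
      using assms ne unfolding homog_def by (metis add.commute add.left_commute mult_eq_0_iff)+
    then have "(\<Sum>c\<in>I. X b c * Y c a) = 0" "(\<Sum>c\<in>I. Y b c * X c a) = 0"
      by (simp_all only: sum.neutral_const)
    then have "brk I X Y b a = 0" by (simp add: brk_def mmul_def)
    with nz show False by simp
  qed
qed

lemma homog_msc: "homog deg k X \<Longrightarrow> homog deg k (msc c X)"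
  by (simp add: homog_def msc_def)

lemma homog_iter:
  assumes "homog deg l Y" "homog deg k X"
  shows "homog deg (k + real r * l) ((brk I Y ^^ r) X)"
proof (induction r)
  case 0 then show ?case using assms by simp
next
  case (Suc r)
  then show ?case using homog_brk[OF assms(1) Suc] by (simp add: algebra_simps)
qed

lemma nonneg_homog_neg_zero:
  assumes "homog deg k X" "k < 0" "nonneg deg X"
  shows "X = mzero"
  using assms by (force simp: homog_def nonneg_def mzero_def fun_eq_iff)

definition deg_part :: "('i \<Rightarrow> real) \<Rightarrow> real \<Rightarrow> ('i \<Rightarrow> 'i \<Rightarrow> complex) \<Rightarrow> 'i \<Rightarrow> 'i \<Rightarrow> complex" where
  "deg_part deg k X = (\<lambda>b a. if deg b = deg a + k then X b a else 0)"

lemma homog_deg_part: "homog deg k (deg_part deg k X)"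
  by (simp add: homog_def deg_part_def)

lemma mat_on_deg_part: "mat_on I X \<Longrightarrow> mat_on I (deg_part deg k X)"
  by (simp add: mat_on_def deg_part_def)

lemma nonneg_deg_part: "nonneg deg X \<Longrightarrow> nonneg deg (deg_part deg k X)"
  unfolding nonneg_def deg_part_def by (metis add_le_same_cancel1)

lemma deg_part_brk:
  assumes "homog deg l Y"
  shows "deg_part deg k (brk I Y X) = brk I Y (deg_part deg (k - l) X)"
proof -
  have "Y b c * deg_part deg (k - l) X c a = (if deg b = deg a + k then Y b c * X c a else 0)"
    "deg_part deg (k - l) X b c * Y c a = (if deg b = deg a + k then X b c * Y c a else 0)"
    for a b c
    using assms unfolding homog_def deg_part_def
    by (cases "Y b c = 0"; cases "Y c a = 0"; auto)+
  then show ?thesis by (simp add: fun_eq_iff brk_def mmul_def deg_part_def)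
qed

lemma deg_part_iter:
  assumes "homog deg l Y"
  shows "deg_part deg k ((brk I Y ^^ r) X) = (brk I Y ^^ r) (deg_part deg (k - real r * l) X)"
proof (induction r arbitrary: k)
  case 0 then show ?case by simp
next
  case (Suc r)
  then show ?case by (simp add: deg_part_brk[OF assms] algebra_simps)
qed

definition diagonal :: "('i \<Rightarrow> 'i \<Rightarrow> complex) \<Rightarrow> bool" where
  "diagonal X \<longleftrightarrow> (\<forall>a b. X b a \<noteq> 0 \<longrightarrow> b = a)"

lemma mmul_diagonal:
  assumes "finite I" "diagonal B"
  shows "mmul I B X b a = (if b \<in> I then B b b * X b a else 0)"
    and "mmul I X B b a = (if a \<in> I then X b a * B a a else 0)"
proof -
  show "mmul I B X b a = (if b \<in> I then B b b * X b a else 0)"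
    unfolding mmul_def by (rule sum_single) (use assms in \<open>auto simp: diagonal_def\<close>)
  show "mmul I X B b a = (if a \<in> I then X b a * B a a else 0)"
    unfolding mmul_def by (rule sum_single) (use assms in \<open>auto simp: diagonal_def\<close>)
qed

lemma diagonal_brk_diagonal:
  assumes "finite I" "diagonal B" "diagonal B'"
  shows "brk I B B' = mzero"
  using assms unfolding fun_eq_iff brk_def mzero_def mmul_diagonal[OF assms(1,2)]
  by (auto simp: diagonal_def)

lemma brk_diagonal_on_diagonal:
  assumes "finite I" "diagonal B"
  shows "brk I B X a a = 0"
  unfolding brk_def mmul_diagonal[OF assms] by simp

lemma brk_weight_diagonal:
  assumes fin: "finite I" and dH: "diagonal H"
    and Hd: "\<And>a b. a \<in> I \<Longrightarrow> b \<in> I \<Longrightarrow> H b b - H a a = complex_of_real (2 * (deg b - deg a))"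
    and mZ: "mat_on I Z" and hZ: "homog deg k Z"
  shows "brk I H Z = msc (complex_of_real (2 * k)) Z"
  unfolding fun_eq_iff
proof (intro allI)
  fix b a
  show "brk I H Z b a = msc (complex_of_real (2 * k)) Z b a"
  proof (cases "Z b a = 0")
    case False
    then have "a \<in> I" "b \<in> I" "deg b = deg a + k" using mZ hZ by (auto simp: mat_on_def homog_def)
    then show ?thesis using Hd[of a b]
      unfolding brk_def mmul_diagonal[OF fin dH] by (simp add: msc_def algebra_simps)
  qed (simp add: brk_def mmul_diagonal[OF fin dH] msc_def)
qed

text \<open>The degrees of basis vectors differ by integers and
  matrices of degree above N vanish; D lowers and E raises the degree by one, and H = [E,D]
  acts on matrices of degree k by the scalar 2k, so that ad D, ad E, ad H behave like the
  standard basis f, e, h of sl_2 on the homogeneous components.\<close>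
locale sl2_triple =
  fixes I :: "'i set" and deg :: "'i \<Rightarrow> real" and N :: real
    and D E H :: "'i \<Rightarrow> 'i \<Rightarrow> complex"
  assumes fin: "finite I"
    and int_deg: "\<And>a b. a \<in> I \<Longrightarrow> b \<in> I \<Longrightarrow> deg b - deg a \<in> \<int>"
    and bounded: "\<And>k Z. k > N \<Longrightarrow> mat_on I Z \<Longrightarrow> homog deg k Z \<Longrightarrow> Z = mzero"
    and mat_D: "mat_on I D" and mat_E: "mat_on I E"
    and homog_D: "homog deg (-1) D" and homog_E: "homog deg 1 E"
    and E_D: "brk I E D = H"
    and H_weight: "\<And>k Z. mat_on I Z \<Longrightarrow> homog deg k Z \<Longrightarrow> brk I H Z = msc (complex_of_real (2 * k)) Z"
begin

lemma brk_E_lowering_string: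
  assumes mW: "mat_on I W" and hW: "homog deg (real n) W" and EW: "brk I E W = mzero"
  shows "brk I E ((brk I D ^^ Suc i) W) =
           msc (of_nat (Suc i) * (2 * of_nat n - of_nat i)) ((brk I D ^^ i) W)"
proof (induction i)
  case 0
  have "brk I E (brk I D W) = madd (brk I H W) (brk I D (brk I E W))"
    using jacobi[OF fin, of E D W] E_D by simp
  then show ?case using H_weight[OF mW hW] EW by simp
next
  case (Suc i)
  let ?Z = "(brk I D ^^ Suc i) W"
  have mZ: "mat_on I ?Z" by (rule mat_on_iter[OF mat_D mW])
  have hZ: "homog deg (real n + real (Suc i) * -1) ?Z" by (rule homog_iter[OF homog_D hW])
  have "brk I E (brk I D ?Z) = madd (brk I H ?Z) (brk I D (brk I E ?Z))"
    using jacobi[OF fin, of E D ?Z] E_D by simp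
  also have "\<dots> = madd (msc (complex_of_real (2 * (real n + real (Suc i) * -1))) ?Z)
       (msc (of_nat (Suc i) * (2 * of_nat n - of_nat i)) ?Z)"
    using H_weight[OF mZ hZ] Suc by (simp add: brk_msc_right)
  also have "\<dots> = msc (of_nat (Suc (Suc i)) * (2 * of_nat n - of_nat (Suc i))) ?Z"
    by (simp add: msc_madd algebra_simps)
  finally show ?case by simp
qed

lemma lowering_string_nonzero:
  assumes mW: "mat_on I W" and hW: "homog deg (real n) W" and EW: "brk I E W = mzero"
    and W0: "W \<noteq> mzero" and "i \<le> 2 * n"
  shows "(brk I D ^^ i) W \<noteq> mzero"
  using \<open>i \<le> 2 * n\<close>
proof (induction i)
  case 0 then show ?case using W0 by simp
next
  case (Suc i)
  have "(2 * of_nat n - of_nat i :: complex) = of_nat (2 * n - i)"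
    using Suc.prems by (simp add: of_nat_diff)
  then have "(of_nat (Suc i) * (2 * of_nat n - of_nat i) :: complex) = of_nat (Suc i * (2 * n - i))"
    by (simp only: of_nat_mult)
  then have "(of_nat (Suc i) * (2 * of_nat n - of_nat i) :: complex) \<noteq> 0"
    using Suc.prems by (simp only: of_nat_eq_0_iff) simp
  moreover have "(brk I D ^^ i) W \<noteq> mzero" using Suc by simp
  ultimately show ?case
    using brk_E_lowering_string[OF mW hW EW, of i] by (metis brk_mzero(1) msc_eq_mzero)
qed

lemma top_of_raising_string:
  assumes mY: "mat_on I Y" and hY: "homog deg d Y" and "d \<ge> 0" and Y0: "Y \<noteq> mzero"
  obtains j where "(brk I E ^^ j) Y \<noteq> mzero" "brk I E ((brk I E ^^ j) Y) = mzero"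
proof -
  have "\<exists>j. (brk I E ^^ j) Y \<noteq> mzero \<and> (brk I E ^^ Suc j) Y = mzero"
  proof (rule ccontr)
    assume "\<not> ?thesis"
    then have all: "(brk I E ^^ j) Y \<noteq> mzero" for j
      using Y0 by (induction j) auto
    define j where "j = nat \<lceil>N\<rceil> + 1"
    have "(brk I E ^^ j) Y = mzero"
    proof (rule bounded)
      show "homog deg (d + real j * 1) ((brk I E ^^ j) Y)" by (rule homog_iter[OF homog_E hY])
      show "mat_on I ((brk I E ^^ j) Y)" by (rule mat_on_iter[OF mat_E mY])
      show "d + real j * 1 > N"
        using \<open>d \<ge> 0\<close> real_nat_ceiling_ge[of N] unfolding j_def by simp
    qed
    with all show False by blast
  qed
  then show ?thesis using that by auto
qed

text \<open>Otherwise the top homogeneous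
  component of positive degree would be raised to a highest weight vector of some degree
  n > 0, whose image under (ad D)^2n is a nonzero component of negative degree -n.\<close>
lemma degree_zero_of_nonneg_submodule:
  assumes closed: "\<And>X. X \<in> M \<Longrightarrow> mat_on I X \<and> nonneg deg X \<and> brk I D X \<in> M \<and> brk I E X \<in> M"
    and XM: "X \<in> M"
  shows "homog deg 0 X"
proof (rule ccontr)
  assume "\<not> homog deg 0 X"
  then obtain a b where nz: "X b a \<noteq> 0" and ne: "deg b \<noteq> deg a" unfolding homog_def by auto
  have mX: "mat_on I X" and nX: "nonneg deg X" using closed[OF XM] by auto
  obtain K :: nat where K: "deg b - deg a = real K" "K \<ge> 1"
  proof -
    have "deg b - deg a \<in> \<int>" using int_deg mat_onD[OF mX nz] by blast
    then obtain z :: int where z: "deg b - deg a = of_int z" by (auto elim: Ints_cases)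
    have "deg a \<le> deg b" using nX nz unfolding nonneg_def by auto
    with ne z have "z \<ge> 1" by simp
    with z that[of "nat z"] show ?thesis by simp
  qed
  define Y where "Y = deg_part deg (real K) X"
  have mY: "mat_on I Y" unfolding Y_def by (rule mat_on_deg_part[OF mX])
  have hY: "homog deg (real K) Y" unfolding Y_def by (rule homog_deg_part)
  have "Y b a \<noteq> 0" using nz K unfolding Y_def deg_part_def by (simp add: algebra_simps)
  then have "Y \<noteq> mzero" by (auto simp: mzero_def)
  then obtain j where Wnz: "(brk I E ^^ j) Y \<noteq> mzero" and EW: "brk I E ((brk I E ^^ j) Y) = mzero"
    using top_of_raising_string[OF mY hY] by auto
  define W where "W = (brk I E ^^ j) Y"
  define n where "n = K + j"
  have hW: "homog deg (real n) W"
    using homog_iter[OF homog_E hY, of j I] unfolding W_def n_def by simp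
  have mW: "mat_on I W" unfolding W_def by (rule mat_on_iter[OF mat_E mY])
  have DW: "(brk I D ^^ (2 * n)) W \<noteq> mzero"
    by (rule lowering_string_nonzero[OF mW hW]) (use EW Wnz W_def in auto)
  define Z where "Z = (brk I D ^^ (2 * n)) ((brk I E ^^ j) X)"
  have "(brk I E ^^ j) X \<in> M" by (induction j) (use XM closed in auto)
  then have ZM: "Z \<in> M" unfolding Z_def by (induction n) (use closed in auto)
  have "deg_part deg (- real n) Z
      = (brk I D ^^ (2 * n)) (deg_part deg (- real n - real (2 * n) * -1) ((brk I E ^^ j) X))"
    unfolding Z_def by (rule deg_part_iter[OF homog_D])
  also have "\<dots> = (brk I D ^^ (2 * n)) W"
    by (simp add: deg_part_iter[OF homog_E] W_def Y_def n_def)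
  finally have "deg_part deg (- real n) Z \<noteq> mzero" using DW by simp
  moreover have "deg_part deg (- real n) Z = mzero"
    using closed[OF ZM] K(2) n_def
    by (intro nonneg_homog_neg_zero[OF homog_deg_part _ nonneg_deg_part]) auto
  ultimately show False by simp
qed

end

definition e0 :: "nat \<Rightarrow> nat \<Rightarrow> complex" where
  "e0 = (\<lambda>i j. if i = 0 \<and> j = 1 then 1 else 0)"

definition f0 :: "nat \<Rightarrow> nat \<Rightarrow> complex" where
  "f0 = (\<lambda>i j. if i = 1 \<and> j = 0 then 1 else 0)"

definition h0 :: "nat \<Rightarrow> nat \<Rightarrow> complex" where
  "h0 = (\<lambda>i j. if i = 0 \<and> j = 0 then 1 else if i = 1 \<and> j = 1 then -1 else 0)"

lemma sl2_basis: "e0 \<in> sl2_set" "f0 \<in> sl2_set" "h0 \<in> sl2_set"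
  by (auto simp: sl2_set_def mat_on_def e0_def f0_def h0_def)

lemma mmul_pair: "mmul {0::nat, 1} X Y = (\<lambda>b a. X b 0 * Y 0 a + X b 1 * Y 1 a)"
  by (simp add: mmul_def fun_eq_iff)

lemma sl2_closed:
  assumes "A \<in> sl2_set" "B \<in> sl2_set"
  shows "madd A B \<in> sl2_set" "msc c A \<in> sl2_set" "brk {0,1} A B \<in> sl2_set"
  using assms unfolding brk_def mmul_pair
  by (auto simp: sl2_set_def mat_on_def madd_def msc_def algebra_simps distrib_left[symmetric])

lemma mzero_sl2: "mzero \<in> sl2_set"
  by (auto simp: sl2_set_def mat_on_def mzero_def)

text \<open>The brackets of an sl_2 are not confined to a line: [[e,f],[h,e]] = 4e is nonzero,
  whereas the bracket of two multiples of one matrix vanishes.\<close>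
lemma sl2_brackets_not_in_line:
  assumes iso: "iso_sl2 I s"
    and line: "\<And>Y Y'. Y \<in> s \<Longrightarrow> Y' \<in> s \<Longrightarrow> \<exists>c. brk I Y Y' = msc c D"
  shows False
proof -
  obtain \<phi> where bij: "bij_betw \<phi> sl2_set s"
    and br: "\<And>A B. A \<in> sl2_set \<Longrightarrow> B \<in> sl2_set \<Longrightarrow> \<phi> (brk {0,1} A B) = brk I (\<phi> A) (\<phi> B)"
    and sc: "\<And>c A. A \<in> sl2_set \<Longrightarrow> \<phi> (msc c A) = msc c (\<phi> A)"
    using iso unfolding iso_sl2_def by blast
  have in_s: "\<phi> A \<in> s" if "A \<in> sl2_set" for A using bij that by (auto simp: bij_betw_def)
  have "brk {0,1} (brk {0,1} e0 f0) (brk {0,1} h0 e0) = msc 4 e0"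
    unfolding brk_def mmul_pair by (auto simp: e0_def f0_def h0_def msc_def fun_eq_iff)
  then have "\<phi> (msc 4 e0) = brk I (brk I (\<phi> e0) (\<phi> f0)) (brk I (\<phi> h0) (\<phi> e0))"
    using br sl2_closed sl2_basis by metis
  moreover obtain c c' where "brk I (\<phi> e0) (\<phi> f0) = msc c D" "brk I (\<phi> h0) (\<phi> e0) = msc c' D"
    using line in_s sl2_basis by meson
  ultimately have "\<phi> (msc 4 e0) = \<phi> (msc 0 e0)"
    using sc[OF sl2_basis(1)] by (simp add: brk_msc_left brk_msc_right brk_self msc_eq_mzero)
  then have "msc 4 e0 = msc 0 e0"
    using bij sl2_closed sl2_basis unfolding bij_betw_def inj_on_def by metis
  then have "msc 4 e0 0 1 = msc 0 e0 0 1" by simp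
  then show False by (simp add: msc_def e0_def)
qed

lemma graded_sl2_subD:
  assumes "graded_sl2_sub I deg S s"
  shows "lie_sub I s" "s \<subseteq> sp_set I S" "iso_sl2 I s"
    "\<And>X. X \<in> s \<Longrightarrow> \<exists>A\<in>s. \<exists>B\<in>s. \<exists>C\<in>s. homog deg (-1) A \<and> homog deg 0 B \<and> homog deg 1 C \<and>
        X = madd A (madd B C)"
  using assms unfolding graded_sl2_sub_def by blast+

lemma lie_sub_brk: "lie_sub I s \<Longrightarrow> X \<in> s \<Longrightarrow> Y \<in> s \<Longrightarrow> brk I X Y \<in> s"
  by (simp add: lie_sub_def)

lemma lie_sub_msc: "lie_sub I s \<Longrightarrow> X \<in> s \<Longrightarrow> msc c X \<in> s"
  by (simp add: lie_sub_def msubspace_def)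

lemma sp_mat_on: "X \<in> sp_set I S \<Longrightarrow> mat_on I X"
  by (simp add: sp_set_def)

lemma graded_sl2_homog_zero:
  assumes g: "graded_sl2_sub I deg S s" and Y: "Y \<in> s" and h: "homog deg k Y"
    and k: "k \<noteq> -1" "k \<noteq> 0" "k \<noteq> 1"
  shows "Y = mzero"
proof -
  obtain A B C where ABC: "homog deg (-1) A" "homog deg 0 B" "homog deg 1 C" "Y = madd A (madd B C)"
    using graded_sl2_subD(4)[OF g Y] by blast
  show ?thesis unfolding fun_eq_iff mzero_def
  proof (intro allI, rule ccontr)
    fix b a assume nz: "Y b a \<noteq> 0"
    then have d: "deg b = deg a + k" using h unfolding homog_def by blast
    from nz ABC(4) have "A b a \<noteq> 0 \<or> B b a \<noteq> 0 \<or> C b a \<noteq> 0" by (auto simp: madd_def)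
    then show False using ABC(1-3) d k unfolding homog_def by force
  qed
qed

text \<open>If the degree -1 part of s is spanned by D and its degree 0 part is diagonal, then s
  has a nonzero element of degree 1: otherwise all brackets of s would be multiples of D,
  which is impossible in sl_2.\<close>
lemma graded_sl2_has_degree_one:
  assumes g: "graded_sl2_sub I deg S s" and fin: "finite I"
    and Ds: "D \<in> s" and hD: "homog deg (-1) D"
    and minus: "\<And>A. A \<in> s \<Longrightarrow> homog deg (-1) A \<Longrightarrow> \<exists>\<alpha>. A = msc \<alpha> D"
    and zero: "\<And>B. B \<in> s \<Longrightarrow> homog deg 0 B \<Longrightarrow> diagonal B"
  shows "\<exists>C\<in>s. homog deg 1 C \<and> C \<noteq> mzero"
proof (rule ccontr)
  assume no_C: "\<not> ?thesis"
  have s_lie: "lie_sub I s" using graded_sl2_subD(1)[OF g] .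
  have dec: "\<exists>\<alpha> B. diagonal B \<and> (\<exists>c. brk I D B = msc c D) \<and> Y = madd (msc \<alpha> D) B"
    if "Y \<in> s" for Y
  proof -
    obtain A B C where ABC: "A \<in> s" "B \<in> s" "C \<in> s" "homog deg (-1) A" "homog deg 0 B"
      "homog deg 1 C" "Y = madd A (madd B C)" using graded_sl2_subD(4)[OF g \<open>Y \<in> s\<close>] by blast
    obtain \<alpha> where "A = msc \<alpha> D" using minus ABC by blast
    moreover have "C = mzero" using no_C ABC by blast
    moreover have "\<exists>c. brk I D B = msc c D"
      using minus lie_sub_brk[OF s_lie Ds ABC(2)] homog_brk[OF hD ABC(5)] by simp
    ultimately show ?thesis using ABC zero by auto
  qed
  have "\<exists>c. brk I Y Y' = msc c D" if Ys: "Y \<in> s" "Y' \<in> s" for Y Y'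
  proof -
    obtain \<alpha> B c where B: "diagonal B" "brk I D B = msc c D" "Y = madd (msc \<alpha> D) B"
      using dec[OF Ys(1)] by blast
    obtain \<alpha>' B' c' where B': "diagonal B'" "brk I D B' = msc c' D" "Y' = madd (msc \<alpha>' D) B'"
      using dec[OF Ys(2)] by blast
    have "brk I B D = msc (- c) D" using B(2) brk_antisym[of I B D] by (simp add: msc_def fun_eq_iff)
    then have "brk I Y Y' = msc (\<alpha> * c' - \<alpha>' * c) D"
      unfolding B(3) B'(3) brk_madd_left brk_madd_right brk_msc_left brk_msc_right
      using B'(2) diagonal_brk_diagonal[OF fin B(1) B'(1)]
      by (simp add: brk_self msc_def madd_def mzero_def fun_eq_iff algebra_simps)
    then show ?thesis by blast
  qed
  then show False using sl2_brackets_not_in_line graded_sl2_subD(3)[OF g] by blast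
qed

definition nonneg_submodule :: "'i set \<Rightarrow> ('i \<Rightarrow> real) \<Rightarrow> ('i \<Rightarrow> 'i \<Rightarrow> complex) \<Rightarrow>
    ('i \<Rightarrow> 'i \<Rightarrow> complex) set \<Rightarrow> ('i \<Rightarrow> 'i \<Rightarrow> complex) set \<Rightarrow> bool" where
  "nonneg_submodule I deg S s M \<longleftrightarrow> msubspace I M \<and> M \<subseteq> sp_set I S \<inter> {X. nonneg deg X} \<and>
     (\<forall>Y\<in>s. \<forall>X\<in>M. brk I Y X \<in> M)"

lemma lmax_eqI:
  assumes "nonneg_submodule I deg S s C"
    and "\<And>M X. nonneg_submodule I deg S s M \<Longrightarrow> X \<in> M \<Longrightarrow> X \<in> C"
  shows "lmax I deg S s = C"
  using assms unfolding lmax_def nonneg_submodule_def[symmetric] by blast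

lemma nonneg_submoduleD:
  assumes "nonneg_submodule I deg S s M" "X \<in> M"
  shows "X \<in> sp_set I S" "mat_on I X" "nonneg deg X" "\<And>Y. Y \<in> s \<Longrightarrow> brk I Y X \<in> M"
  using assms by (auto simp: nonneg_submodule_def sp_set_def)

text \<open>A nondegenerate form admits no nonzero scalar infinitesimal isometries: if X is
  c times the identity then X^T S + S X = 2c S.\<close>
lemma sp_scalar_zero:
  assumes fin: "finite I" and nd: "nondeg I S" and z: "z \<in> I"
    and Xsp: "X \<in> sp_set I S" and dX: "diagonal X" and scalar: "\<And>a. a \<in> I \<Longrightarrow> X a a = c"
  shows "c = 0"
proof (rule ccontr)
  assume c: "c \<noteq> 0"
  have "S a b = 0" if ab: "a \<in> I" "b \<in> I" for a b
  proof -
    have "(\<Sum>d\<in>I. X d a * S d b) = c * S a b"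
      using ab scalar dX by (subst sum_single[OF fin, where z=a]) (auto simp: diagonal_def)
    moreover have "(\<Sum>d\<in>I. S a d * X d b) = c * S a b"
      using ab scalar dX by (subst sum_single[OF fin, where z=b]) (auto simp: diagonal_def)
    moreover have "(\<Sum>d\<in>I. X d a * S d b) + (\<Sum>d\<in>I. S a d * X d b) = 0"
      using Xsp ab unfolding sp_set_def by blast
    ultimately have "2 * c * S a b = 0" by simp
    with c show ?thesis by simp
  qed
  then have "\<forall>b\<in>I. (\<Sum>a\<in>I. (if a = z then 1 else 0) * S a b) = 0"
    by (auto intro: sum.neutral)
  moreover have "(\<forall>b\<in>I. (\<Sum>a\<in>I. (if a = z then 1 else 0) * S a b) = 0) \<longrightarrow>
      (\<forall>a\<in>I. (if a = z then 1 else 0 :: complex) = 0)"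
    using nd unfolding nondeg_def by (rule spec)
  ultimately have "\<forall>a\<in>I. (if a = z then 1 else 0 :: complex) = 0" by (rule rev_mp)
  then show False using z by auto
qed

lemma in_Vidx [simp]: "(x, i) \<in> Vidx p \<longleftrightarrow> - int p \<le> i \<and> i \<le> int p"
  by (auto simp: Vidx_def)

lemma in_Vidx': "a \<in> Vidx p \<longleftrightarrow> - int p \<le> snd a \<and> snd a \<le> int p"
  by (cases a) simp

lemma finite_Vidx: "finite (Vidx p)"
proof -
  have "Vidx p = UNIV \<times> {- int p..int p}" by (auto simp: Vidx_def)
  then show ?thesis by simp
qed

lemma homog_V:
  assumes "homog Vdeg k X" "X b a \<noteq> 0"
  shows "real_of_int (snd b) = real_of_int (snd a) + k"
  using assms unfolding homog_def Vdeg_def by blast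

lemma V_int_deg: "Vdeg b - Vdeg a \<in> \<int>"
  by (simp add: Vdeg_def)

lemma V_bounded:
  assumes "k > real (2 * p)" "mat_on (Vidx p) Z" "homog Vdeg k Z"
  shows "Z = mzero"
  unfolding fun_eq_iff mzero_def
proof (intro allI, rule ccontr)
  fix b a assume nz: "Z b a \<noteq> 0"
  have "a \<in> Vidx p" "b \<in> Vidx p" using mat_onD[OF assms(2) nz] by auto
  moreover have "real_of_int (snd b) = real_of_int (snd a) + k" using homog_V[OF assms(3) nz] .
  ultimately show False using assms(1) by (simp add: in_Vidx')
qed

lemma mat_on_Vdelta: "mat_on (Vidx p) (Vdelta p)"
  by (auto simp: mat_on_def Vdelta_def)

lemma homog_Vdelta: "homog Vdeg (-1) (Vdelta p)"
  by (auto simp: homog_def Vdelta_def Vdeg_def)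

lemma mmul_Vdelta:
  assumes "mat_on (Vidx p) X"
  shows "mmul (Vidx p) X (Vdelta p) b a = (if a \<in> Vidx p then X b (fst a, snd a - 1) else 0)"
    and "mmul (Vidx p) (Vdelta p) X b a = (if b \<in> Vidx p then X (fst b, snd b + 1) a else 0)"
proof -
  have "mmul (Vidx p) X (Vdelta p) b a = (if (fst a, snd a - 1) \<in> Vidx p
      then X b (fst a, snd a - 1) * Vdelta p (fst a, snd a - 1) a else 0)"
    unfolding mmul_def by (rule sum_single[OF finite_Vidx]) (auto simp: Vdelta_def)
  moreover have "X b (fst a, snd a - 1) = 0" if "(fst a, snd a - 1) \<notin> Vidx p"
    using mat_onD[OF assms, of b "(fst a, snd a - 1)"] that by blast
  ultimately show "mmul (Vidx p) X (Vdelta p) b a = (if a \<in> Vidx p then X b (fst a, snd a - 1) else 0)"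
    by (cases a) (auto simp: Vdelta_def)
  have "mmul (Vidx p) (Vdelta p) X b a = (if (fst b, snd b + 1) \<in> Vidx p
      then Vdelta p b (fst b, snd b + 1) * X (fst b, snd b + 1) a else 0)"
    unfolding mmul_def by (rule sum_single[OF finite_Vidx]) (auto simp: Vdelta_def)
  moreover have "X (fst b, snd b + 1) a = 0" if "(fst b, snd b + 1) \<notin> Vidx p"
    using mat_onD[OF assms, of "(fst b, snd b + 1)" a] that by blast
  ultimately show "mmul (Vidx p) (Vdelta p) X b a = (if b \<in> Vidx p then X (fst b, snd b + 1) a else 0)"
    by (cases b) (auto simp: Vdelta_def)
qed

lemma brk_Vdelta:
  assumes "mat_on (Vidx p) Y"
  shows "brk (Vidx p) Y (Vdelta p) b a =
      (if a \<in> Vidx p then Y b (fst a, snd a - 1) else 0) - (if b \<in> Vidx p then Y (fst b, snd b + 1) a else 0)"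
    and "brk (Vidx p) (Vdelta p) Y b a =
      (if b \<in> Vidx p then Y (fst b, snd b + 1) a else 0) - (if a \<in> Vidx p then Y b (fst a, snd a - 1) else 0)"
  unfolding brk_def mmul_Vdelta[OF assms] by simp_all

definition preserves_halves :: "(bool \<times> int \<Rightarrow> bool \<times> int \<Rightarrow> complex) \<Rightarrow> bool" where
  "preserves_halves Y \<longleftrightarrow> (\<forall>x y i j. x \<noteq> y \<longrightarrow> Y (x, j) (y, i) = 0)"

lemma preserves_halvesD: "preserves_halves Y \<Longrightarrow> Y b a \<noteq> 0 \<Longrightarrow> fst b = fst a"
  unfolding preserves_halves_def by (metis prod.collapse)

lemma mapp_basis_vector:
  assumes "finite I"
  shows "mapp I Y (\<lambda>z. if z = c then 1 else 0) = (\<lambda>b. if c \<in> I then Y b c else 0)"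
  unfolding mapp_def fun_eq_iff
  by (intro allI, subst sum_single[OF assms, where z=c]) auto

lemma preserves_halves_if_invariant:
  assumes inE: "invariant (Vidx p) s (Espace p)" and inF: "invariant (Vidx p) s (Fspace p)"
    and Ys: "Y \<in> s" and mY: "mat_on (Vidx p) Y"
  shows "preserves_halves Y"
  unfolding preserves_halves_def
proof (intro allI impI)
  fix x y :: bool and i j :: int assume xy: "x \<noteq> y"
  let ?v = "\<lambda>z. if z = (y, i) then (1::complex) else 0"
  show "Y (x, j) (y, i) = 0"
  proof (cases "(y, i) \<in> Vidx p")
    case False then show ?thesis using mY by (auto simp: mat_on_def)
  next
    case True
    show ?thesis
    proof (cases y)
      case False
      have "?v \<in> Espace p" using True False by (auto simp: Espace_def)
      then have "mapp (Vidx p) Y ?v \<in> Espace p" using inE Ys by (auto simp: invariant_def)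
      then show ?thesis using True False xy unfolding mapp_basis_vector[OF finite_Vidx]
        by (auto simp: Espace_def)
    next
      case T: True
      have "?v \<in> Fspace p" using True T by (auto simp: Fspace_def)
      then have "mapp (Vidx p) Y ?v \<in> Fspace p" using inF Ys by (auto simp: invariant_def)
      then show ?thesis using True T xy unfolding mapp_basis_vector[OF finite_Vidx]
        by (auto simp: Fspace_def)
    qed
  qed
qed

lemma sign_step:
  assumes "i \<le> int p"
  shows "(-1::complex) ^ nat (int p - (i - 1)) = - ((-1) ^ nat (int p - i))"
proof -
  have "nat (int p - (i - 1)) = Suc (nat (int p - i))" using assms by simp
  then show ?thesis by simp
qed

lemma Vform_nonzero: "Vform p c b \<noteq> 0 \<Longrightarrow> c = (\<not> fst b, - snd b)"
  unfolding Vform_def by (cases c; cases b) (simp split: if_splits)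

lemma Vform_antisym: "Vform p a c = - Vform p c a"
  by (cases a; cases c) (auto simp add: Vform_def)

lemma Vform_partner:
  assumes "\<bar>i\<bar> \<le> int p"
  shows "Vform p (x, i) (\<not> x, - i) =
    (if x then - ((-1) ^ nat (int p - i)) else (-1) ^ nat (int p - i))"
proof -
  have "even (nat (int p + i)) \<longleftrightarrow> even (nat (int p - i))"
    using assms by (simp add: even_nat_iff)
  then have "(-1::complex) ^ nat (int p + i) = (-1) ^ nat (int p - i)"
    by (simp add: minus_one_power_iff)
  then show ?thesis using assms by (auto simp: Vform_def)
qed

lemma Vform_condition:
  assumes a: "a \<in> Vidx p" and b: "b \<in> Vidx p"
  shows "(\<Sum>c\<in>Vidx p. X c a * Vform p c b) + (\<Sum>c\<in>Vidx p. Vform p a c * X c b) =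
         X (\<not> fst b, - snd b) a * Vform p (\<not> fst b, - snd b) b +
         Vform p a (\<not> fst a, - snd a) * X (\<not> fst a, - snd a) b"
proof -
  have bV: "(\<not> fst b, - snd b) \<in> Vidx p" and aV: "(\<not> fst a, - snd a) \<in> Vidx p"
    using a b by (auto simp: in_Vidx')
  have "Vform p c b = 0" if "c \<noteq> (\<not> fst b, - snd b)" for c using Vform_nonzero that by blast
  then have "(\<Sum>c\<in>Vidx p. X c a * Vform p c b) = X (\<not> fst b, - snd b) a * Vform p (\<not> fst b, - snd b) b"
    using sum_single[OF finite_Vidx, where z="(\<not> fst b, - snd b)" and f="\<lambda>c. X c a * Vform p c b"] bV
    by simp
  moreover have "Vform p a c = 0" if "c \<noteq> (\<not> fst a, - snd a)" for c
    using Vform_nonzero Vform_antisym that by (metis neg_equal_0_iff_equal)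
  then have "(\<Sum>c\<in>Vidx p. Vform p a c * X c b) = Vform p a (\<not> fst a, - snd a) * X (\<not> fst a, - snd a) b"
    using sum_single[OF finite_Vidx, where z="(\<not> fst a, - snd a)" and f="\<lambda>c. Vform p a c * X c b"] aV
    by simp
  ultimately show ?thesis by simp
qed

lemma sp_V_entry:
  assumes "X \<in> sp_set (Vidx p) (Vform p)" "a \<in> Vidx p" "b \<in> Vidx p"
  shows "X (\<not> fst b, - snd b) a * Vform p (\<not> fst b, - snd b) b +
         Vform p a (\<not> fst a, - snd a) * X (\<not> fst a, - snd a) b = 0"
  using assms Vform_condition[OF assms(2,3), of X] unfolding sp_set_def by auto

definition Eop :: "nat \<Rightarrow> bool \<times> int \<Rightarrow> bool \<times> int \<Rightarrow> complex" where
  "Eop p b a = (if fst b = fst a \<and> snd b = snd a + 1 \<and> - int p \<le> snd a \<and> snd a < int p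
     then of_int ((int p - snd a) * (int p + snd a + 1)) else 0)"

definition Hop :: "nat \<Rightarrow> bool \<times> int \<Rightarrow> bool \<times> int \<Rightarrow> complex" where
  "Hop p b a = (if b = a \<and> a \<in> Vidx p then of_int (2 * snd a) else 0)"

lemma mat_on_Eop: "mat_on (Vidx p) (Eop p)"
  by (auto simp: mat_on_def Eop_def in_Vidx')

lemma homog_Eop: "homog Vdeg 1 (Eop p)"
  by (auto simp: homog_def Eop_def Vdeg_def)

lemma brk_Eop_Vdelta: "brk (Vidx p) (Eop p) (Vdelta p) = Hop p"
proof -
  define c where "c i = (if - int p \<le> i \<and> i < int p then (int p - i) * (int p + i + 1) else 0)" for i
  have "complex_of_int (c (i - 1)) - of_int (c i) = 2 * of_int i"
    if "- int p \<le> i" "i \<le> int p" for i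
    using that unfolding c_def by (cases "i = - int p"; cases "i = int p") (auto simp: algebra_simps)
  moreover have "Eop p b a = (if fst b = fst a \<and> snd b = snd a + 1 then of_int (c (snd a)) else 0)" for a b
    by (simp add: Eop_def c_def)
  ultimately show ?thesis
    unfolding fun_eq_iff brk_Vdelta[OF mat_on_Eop] by (auto simp: Hop_def in_Vidx')
qed

interpretation V: sl2_triple "Vidx p" Vdeg "real (2 * p)" "Vdelta p" "Eop p" "Hop p"
proof
  show "brk (Vidx p) (Hop p) Z = msc (complex_of_real (2 * k)) Z"
    if "mat_on (Vidx p) Z" "homog Vdeg k Z" for k Z
    by (rule brk_weight_diagonal[OF finite_Vidx _ _ that]) (auto simp: diagonal_def Hop_def Vdeg_def)
qed (use finite_Vidx V_int_deg V_bounded mat_on_Vdelta mat_on_Eop homog_Vdelta homog_Eop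
    brk_Eop_Vdelta in auto)

locale V_setting =
  fixes p :: nat and s :: "(bool \<times> int \<Rightarrow> bool \<times> int \<Rightarrow> complex) set"
  assumes graded: "graded_sl2_sub (Vidx p) Vdeg (Vform p) s"
    and delta_s: "Vdelta p \<in> s"
    and inv_E: "invariant (Vidx p) s (Espace p)" and inv_F: "invariant (Vidx p) s (Fspace p)"
begin

abbreviation "V \<equiv> Vidx p"
abbreviation "D \<equiv> Vdelta p"

lemma s_lie: "lie_sub V s"
  using graded_sl2_subD(1)[OF graded] .

lemma s_sp: "Y \<in> s \<Longrightarrow> Y \<in> sp_set V (Vform p)"
  using graded_sl2_subD(2)[OF graded] by blast

lemma s_mat: "Y \<in> s \<Longrightarrow> mat_on V Y"
  using s_sp sp_mat_on by blast

lemma s_preserves_halves: "Y \<in> s \<Longrightarrow> preserves_halves Y"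
  using preserves_halves_if_invariant[OF inv_E inv_F] s_mat by blast

text \<open>Degree -1: A commutes with delta (degree -2 vanishes in s), so its entries are constant
  along each of E and F, and the symplectic condition links the two constants.\<close>
lemma degree_minus_one:
  assumes As: "A \<in> s" and hA: "homog Vdeg (-1) A"
  shows "\<exists>\<alpha>. A = msc \<alpha> D"
proof -
  have mA: "mat_on V A" using s_mat[OF As] .
  have AD: "brk V A D = mzero"
    using graded_sl2_homog_zero[OF graded lie_sub_brk[OF s_lie As delta_s]
        homog_brk[OF hA homog_Vdelta]] by simp
  define \<alpha> where "\<alpha> x i = A (x, i - 1) (x, i)" for x i
  have const: "\<alpha> x i = \<alpha> x (1 - int p)" if "1 - int p \<le> i" "i \<le> int p" for x i
  proof (rule arith_progression_int[where c=0, simplified, OF _ that])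
    fix i assume "1 - int p < i" "i \<le> int p"
    then show "\<alpha> x i = \<alpha> x (i - 1)"
      using fun_cong[OF fun_cong[OF AD, of "(x, i - 2)"], of "(x, i)"]
      unfolding brk_Vdelta[OF mA] \<alpha>_def by (simp add: mzero_def)
  qed
  have halves: "\<alpha> True (1 - i) = \<alpha> False i" if "- int p < i" "i \<le> int p" for i
  proof -
    have "A (False, i - 1) (False, i) * Vform p (False, i - 1) (True, 1 - i) +
         Vform p (False, i) (True, - i) * A (True, - i) (True, 1 - i) = 0"
      using sp_V_entry[OF s_sp[OF As], of "(False, i)" "(True, 1 - i)"] that by simp
    moreover have "Vform p (False, i - 1) (True, 1 - i) = - ((-1) ^ nat (int p - i))"
      using Vform_partner[of "i - 1" p False] sign_step[of i p] that by simp
    moreover have "Vform p (False, i) (True, - i) = (-1) ^ nat (int p - i)"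
      using Vform_partner[of i p False] that by simp
    ultimately have "(-1) ^ nat (int p - i) * (A (True, - i) (True, 1 - i) - A (False, i - 1) (False, i)) = (0::complex)"
      by (simp add: algebra_simps)
    then show ?thesis unfolding \<alpha>_def by simp
  qed
  have "A b a = \<alpha> False (1 - int p) * D b a" for b a
  proof (cases "fst b = fst a \<and> snd b = snd a - 1 \<and> - int p < snd a \<and> snd a \<le> int p")
    case True
    obtain x i where a: "a = (x, i)" and b: "b = (x, i - 1)" using True by (cases a; cases b) auto
    have "\<alpha> x i = \<alpha> False (1 - int p)"
      using True const[of i] const[of "1 - i"] halves[of "1 - i"] by (cases x) (auto simp: a)
    then show ?thesis using True by (simp add: \<alpha>_def a b Vdelta_def)
  next
    case False
    have "A b a = 0"
    proof (rule ccontr)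
      assume nz: "A b a \<noteq> 0"
      show False
        using False preserves_halvesD[OF s_preserves_halves[OF As] nz] homog_V[OF hA nz]
          mat_onD[OF mA nz] by (simp add: in_Vidx')
    qed
    moreover have "D b a = 0" using False unfolding Vdelta_def by auto
    ultimately show ?thesis by simp
  qed
  then show ?thesis by (auto simp: msc_def fun_eq_iff)
qed

text \<open>Degree 0: preserving E and F and the degree, B is diagonal.\<close>
lemma degree_zero_diagonal:
  assumes Bs: "B \<in> s" and hB: "homog Vdeg 0 B"
  shows "diagonal B"
  unfolding diagonal_def
proof (intro allI impI)
  fix a b assume nz: "B b a \<noteq> 0"
  show "b = a"
    using preserves_halvesD[OF s_preserves_halves[OF Bs] nz] homog_V[OF hB nz]
    by (simp add: prod_eq_iff)
qed

text \<open>Degree 1: for C in s of degree 1, [[C, delta], delta] is a multiple \<kappa> of delta,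
  which makes the subdiagonal of C a quadratic vanishing just outside [-p, p].\<close>
lemma degree_one:
  assumes Cs: "C \<in> s" and hC: "homog Vdeg 1 C"
  shows "\<exists>\<kappa>. C = msc \<kappa> (Eop p)"
proof -
  have mC: "mat_on V C" using s_mat[OF Cs] .
  define B0 where "B0 = brk V C D"
  have B0s: "B0 \<in> s" unfolding B0_def using lie_sub_brk[OF s_lie Cs delta_s] .
  have hB0: "homog Vdeg 0 B0" unfolding B0_def using homog_brk[OF hC homog_Vdelta] by simp
  have mB0: "mat_on V B0" using s_mat[OF B0s] .
  obtain \<kappa> where kap: "brk V B0 D = msc \<kappa> D"
    using degree_minus_one[OF lie_sub_brk[OF s_lie B0s delta_s]] homog_brk[OF hB0 homog_Vdelta] by auto
  have chain: "C (x, i + 1) (x, i) = - \<kappa> / 2 * of_int ((int p - i) * (i - - int p + 1))"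
    if "- int p - 1 \<le> i" "i \<le> int p" for x i
  proof (rule second_difference_chain[where g="\<lambda>i. C (x, i + 1) (x, i)" and \<beta>="\<lambda>i. B0 (x, i) (x, i)"])
    fix i assume "- int p \<le> i" "i \<le> int p"
    then show "B0 (x, i) (x, i) = C (x, i - 1 + 1) (x, i - 1) - C (x, i + 1) (x, i)"
      unfolding B0_def brk_Vdelta[OF mC] by simp
  next
    fix i assume "- int p < i" "i \<le> int p"
    then show "B0 (x, i - 1) (x, i - 1) - B0 (x, i) (x, i) = \<kappa>"
      using fun_cong[OF fun_cong[OF kap, of "(x, i - 1)"], of "(x, i)"]
      unfolding brk_Vdelta[OF mB0] by (simp add: msc_def Vdelta_def)
  next
    show "C (x, - int p - 1 + 1) (x, - int p - 1) = 0" "C (x, int p + 1) (x, int p) = 0"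
      using mC by (auto simp: mat_on_def)
  qed (use that in simp_all)
  have "C b a = - \<kappa> / 2 * Eop p b a" for b a
  proof (cases "fst b = fst a \<and> snd b = snd a + 1 \<and> - int p \<le> snd a \<and> snd a < int p")
    case True
    obtain x i where a: "a = (x, i)" and b: "b = (x, i + 1)" using True by (cases a; cases b) auto
    show ?thesis using True chain[of i x] by (simp add: a b Eop_def algebra_simps)
  next
    case False
    have "C b a = 0"
    proof (rule ccontr)
      assume nz: "C b a \<noteq> 0"
      show False
        using False preserves_halvesD[OF s_preserves_halves[OF Cs] nz] homog_V[OF hC nz]
          mat_onD[OF mC nz] by (simp add: in_Vidx')
    qed
    moreover have "Eop p b a = 0" using False unfolding Eop_def by auto
    ultimately show ?thesis by simp
  qed
  then have "C = msc (- \<kappa> / 2) (Eop p)" by (simp add: msc_def fun_eq_iff)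
  then show ?thesis by blast
qed

lemma Eop_in_s: "Eop p \<in> s"
proof -
  obtain C where C: "C \<in> s" "homog Vdeg 1 C" "C \<noteq> mzero"
    using graded_sl2_has_degree_one[OF graded finite_Vidx delta_s homog_Vdelta
        degree_minus_one degree_zero_diagonal] by blast
  obtain \<kappa> where k: "C = msc \<kappa> (Eop p)" using degree_one[OF C(1,2)] by blast
  then have "\<kappa> \<noteq> 0" using C(3) by (auto simp: msc_eq_mzero)
  then have "Eop p = msc (1 / \<kappa>) C" using k by (simp add: msc_def fun_eq_iff)
  then show ?thesis using lie_sub_msc[OF s_lie C(1)] by simp
qed

lemma s_decomposition:
  assumes "Y \<in> s"
  obtains \<alpha> B \<kappa> where "B \<in> s" "homog Vdeg 0 B" "Y = madd (msc \<alpha> D) (madd B (msc \<kappa> (Eop p)))"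
proof -
  obtain A B C where ABC: "A \<in> s" "B \<in> s" "C \<in> s" "homog Vdeg (-1) A" "homog Vdeg 0 B"
    "homog Vdeg 1 C" "Y = madd A (madd B C)" using graded_sl2_subD(4)[OF graded assms] by blast
  obtain \<alpha> where "A = msc \<alpha> D" using degree_minus_one ABC by blast
  moreover obtain \<kappa> where "C = msc \<kappa> (Eop p)" using degree_one ABC by blast
  ultimately show ?thesis using that ABC by blast
qed

end

text \<open>V_{p;2p} is the tensor product of an irreducible sl_2-module of dimension 2p+1 with the
  two-dimensional multiplicity space span{e, f}.  The embedding mult_embed lets a 2x2 matrix
  act on the multiplicity space, identically in every degree; block_at_bottom reads off the
  2x2 block of a matrix in the lowest degree -p.\<close>
definition half_index :: "bool \<Rightarrow> nat" where
  "half_index x = (if x then 1 else 0)"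

lemma half_index_simps [simp]: "half_index True = 1" "half_index False = 0"
  by (simp_all add: half_index_def)

definition mult_embed :: "nat \<Rightarrow> (nat \<Rightarrow> nat \<Rightarrow> complex) \<Rightarrow> bool \<times> int \<Rightarrow> bool \<times> int \<Rightarrow> complex" where
  "mult_embed p A = (\<lambda>b a. if a \<in> Vidx p \<and> snd b = snd a then A (half_index (fst b)) (half_index (fst a)) else 0)"

definition block_at_bottom :: "nat \<Rightarrow> (bool \<times> int \<Rightarrow> bool \<times> int \<Rightarrow> complex) \<Rightarrow> nat \<Rightarrow> nat \<Rightarrow> complex" where
  "block_at_bottom p X = (\<lambda>i j. if i \<le> 1 \<and> j \<le> 1 then X (i = 1, - int p) (j = 1, - int p) else 0)"

lemma mat_on_mult_embed: "mat_on (Vidx p) (mult_embed p A)"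
  by (auto simp: mat_on_def mult_embed_def in_Vidx')

lemma homog_mult_embed: "homog Vdeg 0 (mult_embed p A)"
  by (auto simp: homog_def mult_embed_def Vdeg_def)

lemma nonneg_mult_embed: "nonneg Vdeg (mult_embed p A)"
  by (auto simp: nonneg_def mult_embed_def Vdeg_def)

lemma mult_embed_madd: "mult_embed p (madd A B) = madd (mult_embed p A) (mult_embed p B)"
  by (auto simp: mult_embed_def madd_def fun_eq_iff)

lemma mult_embed_msc: "mult_embed p (msc c A) = msc c (mult_embed p A)"
  by (auto simp: mult_embed_def msc_def fun_eq_iff)

lemma mult_embed_mzero: "mult_embed p mzero = mzero"
  by (auto simp: mult_embed_def mzero_def fun_eq_iff)

lemma sum_over_degree:
  assumes "- int p \<le> j" "j \<le> int p" and "\<And>c. c \<in> Vidx p \<Longrightarrow> snd c \<noteq> j \<Longrightarrow> f c = 0"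
  shows "(\<Sum>c\<in>Vidx p. f c) = f (False, j) + f (True, j)"
proof -
  have "(\<Sum>c\<in>Vidx p. f c) = (\<Sum>c\<in>{(False, j), (True, j)}. f c)"
  proof (rule sum.mono_neutral_right[OF finite_Vidx])
    show "{(False, j), (True, j)} \<subseteq> Vidx p" using assms by auto
    show "\<forall>c\<in>Vidx p - {(False, j), (True, j)}. f c = 0"
      using assms(3) by (metis (full_types) DiffE insertCI prod.collapse)
  qed
  then show ?thesis by simp
qed

lemma mult_embed_brk: "brk (Vidx p) (mult_embed p A) (mult_embed p B) = mult_embed p (brk {0,1} A B)"
proof -
  have "mmul (Vidx p) (mult_embed p A) (mult_embed p B) b a = mult_embed p (mmul {0,1} A B) b a"
    for A B b a
  proof (cases "a \<in> Vidx p \<and> snd b = snd a")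
    case True
    have "mmul (Vidx p) (mult_embed p A) (mult_embed p B) b a =
        mult_embed p A b (False, snd a) * mult_embed p B (False, snd a) a +
        mult_embed p A b (True, snd a) * mult_embed p B (True, snd a) a"
      unfolding mmul_def by (rule sum_over_degree) (use True in \<open>auto simp: in_Vidx' mult_embed_def\<close>)
    then show ?thesis using True unfolding mmul_pair by (simp add: mult_embed_def in_Vidx')
  next
    case False
    have "mmul (Vidx p) (mult_embed p A) (mult_embed p B) b a = 0"
      unfolding mmul_def by (rule sum.neutral) (use False in \<open>auto simp: mult_embed_def\<close>)
    then show ?thesis using False by (auto simp: mult_embed_def)
  qed
  then show ?thesis by (simp add: fun_eq_iff brk_def mult_embed_def)
qed

lemma mult_embed_inj:
  assumes "mat_on {0,1} A" "mat_on {0,1} B" "mult_embed p A = mult_embed p B"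
  shows "A = B"
proof -
  have "A i j = B i j" if "i \<le> 1" "j \<le> 1" for i j
  proof -
    have "mult_embed p A (i = 1, - int p) (j = 1, - int p) = mult_embed p B (i = 1, - int p) (j = 1, - int p)"
      using assms(3) by simp
    then show ?thesis using that by (auto simp: mult_embed_def half_index_def le_Suc_eq)
  qed
  moreover have "A i j = B i j" if "\<not> (i \<le> 1 \<and> j \<le> 1)" for i j
    using assms(1,2) that unfolding mat_on_def by auto
  ultimately show ?thesis by (meson ext)
qed

lemma mult_embed_sp:
  assumes A: "A \<in> sl2_set"
  shows "mult_embed p A \<in> sp_set (Vidx p) (Vform p)"
  unfolding sp_set_def
proof (intro CollectI conjI ballI mat_on_mult_embed)
  fix a b assume a: "a \<in> Vidx p" and b: "b \<in> Vidx p"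
  obtain x i y j where ab: "a = (x, i)" "b = (y, j)" by (cases a; cases b)
  have tr: "A (Suc 0) (Suc 0) = - A 0 0" using A by (simp add: sl2_set_def eq_neg_iff_add_eq_0 add.commute)
  have ir: "\<bar>i\<bar> \<le> int p" using a ab by (simp add: abs_le_iff)
  have "mult_embed p A (\<not> fst b, - snd b) a * Vform p (\<not> fst b, - snd b) b +
        Vform p a (\<not> fst a, - snd a) * mult_embed p A (\<not> fst a, - snd a) b = 0"
  proof (cases "j = - i")
    case True
    show ?thesis using True ab a b Vform_partner[OF ir, of "\<not> y"] Vform_partner[OF ir, of x]
      by (cases x; cases y) (auto simp: mult_embed_def algebra_simps tr)
  qed (use ab in \<open>auto simp: mult_embed_def\<close>)
  then show "(\<Sum>c\<in>Vidx p. mult_embed p A c a * Vform p c b) + (\<Sum>c\<in>Vidx p. Vform p a c * mult_embed p A c b) = 0"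
    using Vform_condition[OF a b] by simp
qed

lemma brk_degree_op_mult_embed:
  assumes op: "\<And>b a. Op b a = (if fst b = fst a then d (snd b) (snd a) else 0)"
    and d_on: "\<And>j i. d j i \<noteq> 0 \<Longrightarrow> - int p \<le> i \<and> i \<le> int p \<and> - int p \<le> j \<and> j \<le> int p"
  shows "brk (Vidx p) Op (mult_embed p A) = mzero"
  unfolding fun_eq_iff
proof (intro allI)
  fix b a :: "bool \<times> int"
  have m1: "mmul (Vidx p) Op (mult_embed p A) b a =
      (if (fst b, snd a) \<in> Vidx p then Op b (fst b, snd a) * mult_embed p A (fst b, snd a) a else 0)"
    unfolding mmul_def by (rule sum_single[OF finite_Vidx]) (auto simp: op mult_embed_def)
  have m2: "mmul (Vidx p) (mult_embed p A) Op b a =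
      (if (fst a, snd b) \<in> Vidx p then mult_embed p A b (fst a, snd b) * Op (fst a, snd b) a else 0)"
    unfolding mmul_def by (rule sum_single[OF finite_Vidx]) (auto simp: op mult_embed_def)
  show "brk (Vidx p) Op (mult_embed p A) b a = mzero b a"
  proof (cases "d (snd b) (snd a) = 0")
    case True
    then show ?thesis unfolding brk_def m1 m2 by (simp add: op mzero_def mult_embed_def)
  next
    case False
    then show ?thesis using d_on[OF False]
      unfolding brk_def m1 m2 by (simp add: op mzero_def mult_embed_def in_Vidx')
  qed
qed

lemma brk_Vdelta_mult_embed: "brk (Vidx p) (Vdelta p) (mult_embed p A) = mzero"
  by (rule brk_degree_op_mult_embed[where d="\<lambda>j i. if j = i - 1 \<and> - int p < i \<and> i \<le> int p then 1 else 0"])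
    (auto simp: Vdelta_def split: if_splits)

lemma brk_Eop_mult_embed: "brk (Vidx p) (Eop p) (mult_embed p A) = mzero"
  by (rule brk_degree_op_mult_embed[where d="\<lambda>j i. if j = i + 1 \<and> - int p \<le> i \<and> i < int p
      then of_int ((int p - i) * (int p + i + 1)) else 0"])
    (auto simp: Eop_def split: if_splits)

text \<open>Conversely, a degree-0 matrix commuting with delta is constant along the degrees, hence
  lies in the image of mult_embed.\<close>
lemma mult_embed_block_at_bottom:
  assumes mX: "mat_on (Vidx p) X" and hX: "homog Vdeg 0 X"
    and dX: "brk (Vidx p) (Vdelta p) X = mzero"
  shows "X = mult_embed p (block_at_bottom p X)"
proof -
  have const: "X (y, i) (x, i) = X (y, - int p) (x, - int p)" if "- int p \<le> i" "i \<le> int p" for x y i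
  proof (rule arith_progression_int[where c=0, simplified, OF _ that])
    fix i assume "- int p < i" "i \<le> int p"
    then show "X (y, i) (x, i) = X (y, i - 1) (x, i - 1)"
      using fun_cong[OF fun_cong[OF dX, of "(y, i - 1)"], of "(x, i)"]
      unfolding brk_Vdelta[OF mX] by (simp add: mzero_def)
  qed
  have "X b a = mult_embed p (block_at_bottom p X) b a" for b a
  proof (cases "a \<in> Vidx p \<and> snd b = snd a")
    case True
    obtain x y i where ab: "a = (x, i)" "b = (y, i)" using True by (cases a; cases b) auto
    show ?thesis using True const[of i y x] unfolding ab
      by (cases x; cases y) (auto simp: mult_embed_def block_at_bottom_def)
  next
    case False
    have "X b a = 0"
    proof (rule ccontr)
      assume nz: "X b a \<noteq> 0"
      then have "snd b = snd a" using homog_V[OF hX nz] by simp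
      moreover have "a \<in> Vidx p" using mat_onD[OF mX nz] by blast
      ultimately show False using False by simp
    qed
    then show ?thesis using False by (auto simp: mult_embed_def)
  qed
  then show ?thesis by (simp add: fun_eq_iff)
qed

lemma block_at_bottom_sl2: "X (False, - int p) (False, - int p) + X (True, - int p) (True, - int p) = 0
    \<Longrightarrow> block_at_bottom p X \<in> sl2_set"
  by (auto simp: sl2_set_def mat_on_def block_at_bottom_def)

lemma Vform_corner: "Vform p (False, - int p) (True, int p) = 1"
proof -
  have "nat (2 * int p) = 2 * p" by simp
  then show ?thesis by (simp add: Vform_def power_mult)
qed

context V_setting
begin

text \<open>The candidate for lmax: the image of sl_2 acting on the multiplicity space.\<close>
definition Lsl2 :: "(bool \<times> int \<Rightarrow> bool \<times> int \<Rightarrow> complex) set" where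
  "Lsl2 = mult_embed p ` sl2_set"

lemma Lsl2_subspace: "msubspace V Lsl2"
  unfolding msubspace_def Lsl2_def
proof (intro conjI ballI allI)
  show "mult_embed p ` sl2_set \<subseteq> {X. mat_on V X}" using mat_on_mult_embed by blast
  show "mzero \<in> mult_embed p ` sl2_set" using mult_embed_mzero mzero_sl2 by (metis image_eqI)
  fix X Y assume "X \<in> mult_embed p ` sl2_set" "Y \<in> mult_embed p ` sl2_set"
  then obtain A B where "A \<in> sl2_set" "B \<in> sl2_set" "X = mult_embed p A" "Y = mult_embed p B" by blast
  then show "madd X Y \<in> mult_embed p ` sl2_set" using sl2_closed(1) mult_embed_madd by (metis image_eqI)
next
  fix c X assume "X \<in> mult_embed p ` sl2_set"
  then obtain A where "A \<in> sl2_set" "X = mult_embed p A" by blast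
  then show "msc c X \<in> mult_embed p ` sl2_set" using sl2_closed(2) mult_embed_msc by (metis image_eqI)
qed

lemma Lsl2_lie_sub: "lie_sub V Lsl2"
  unfolding lie_sub_def
proof (intro conjI Lsl2_subspace ballI)
  fix X Y assume "X \<in> Lsl2" "Y \<in> Lsl2"
  then obtain A B where "A \<in> sl2_set" "B \<in> sl2_set" "X = mult_embed p A" "Y = mult_embed p B"
    unfolding Lsl2_def by blast
  then show "brk V X Y \<in> Lsl2"
    using mult_embed_brk sl2_closed(3) unfolding Lsl2_def by (metis image_eqI)
qed

lemma Lsl2_iso_sl2: "iso_sl2 V Lsl2"
  unfolding iso_sl2_def
proof (intro exI[of _ "mult_embed p"] conjI ballI allI)
  show "bij_betw (mult_embed p) sl2_set Lsl2"
    unfolding bij_betw_def Lsl2_def inj_on_def using mult_embed_inj by (auto simp: sl2_set_def)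
qed (simp_all add: mult_embed_madd mult_embed_brk mult_embed_msc)

text \<open>Lsl2 is stable under ad s: delta and Eop commute with it, and for B of degree 0 in s,
  [B, mult_embed A] commutes with delta (by Jacobi) and has zero diagonal.\<close>
lemma Lsl2_invariant:
  assumes Ys: "Y \<in> s" and A: "A \<in> sl2_set"
  shows "brk V Y (mult_embed p A) \<in> Lsl2"
proof -
  obtain \<alpha> B \<kappa> where B: "B \<in> s" "homog Vdeg 0 B"
    and Y: "Y = madd (msc \<alpha> D) (madd B (msc \<kappa> (Eop p)))" using s_decomposition[OF Ys] by blast
  define Z where "Z = brk V B (mult_embed p A)"
  have YZ: "brk V Y (mult_embed p A) = Z"
    unfolding Y Z_def brk_madd_left brk_msc_left brk_Vdelta_mult_embed brk_Eop_mult_embed by simp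
  have mZ: "mat_on V Z" unfolding Z_def by (rule mat_on_brk[OF s_mat[OF B(1)] mat_on_mult_embed])
  have hZ: "homog Vdeg 0 Z" unfolding Z_def using homog_brk[OF B(2) homog_mult_embed] by simp
  obtain c where c: "brk V D B = msc c D"
    using degree_minus_one[OF lie_sub_brk[OF s_lie delta_s B(1)]] homog_brk[OF homog_Vdelta B(2)] by auto
  have dZ: "brk V D Z = mzero"
    unfolding Z_def jacobi[OF finite_Vidx] c brk_msc_left brk_Vdelta_mult_embed by simp
  have "diagonal B" using degree_zero_diagonal[OF B] .
  then have "Z (x, - int p) (x, - int p) = 0" for x
    unfolding Z_def by (rule brk_diagonal_on_diagonal[OF finite_Vidx])
  then have "block_at_bottom p Z \<in> sl2_set" by (simp add: block_at_bottom_sl2)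
  then show ?thesis
    using YZ mult_embed_block_at_bottom[OF mZ hZ dZ] unfolding Lsl2_def by (metis image_eqI)
qed

lemma Lsl2_nonneg_submodule: "nonneg_submodule V Vdeg (Vform p) s Lsl2"
  unfolding nonneg_submodule_def
  using Lsl2_subspace mult_embed_sp nonneg_mult_embed Lsl2_invariant by (auto simp: Lsl2_def)

text \<open>Every nonneg submodule lies in Lsl2: its elements have degree 0 by the highest weight
  argument, hence commute with delta, and the symplectic condition at the corner entry
  makes their block traceless.\<close>
lemma nonneg_submodule_in_Lsl2:
  assumes M: "nonneg_submodule V Vdeg (Vform p) s M" and XM: "X \<in> M"
  shows "X \<in> Lsl2"
proof -
  have hX: "homog Vdeg 0 X"
    by (rule V.degree_zero_of_nonneg_submodule[of M])
      (use nonneg_submoduleD[OF M] delta_s Eop_in_s XM in auto)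
  have Xsp: "X \<in> sp_set V (Vform p)" and mX: "mat_on V X" using nonneg_submoduleD[OF M XM] by auto
  have "brk V D X \<in> M" using nonneg_submoduleD(4)[OF M XM delta_s] .
  then have "brk V D X = mzero"
    using nonneg_homog_neg_zero[OF homog_brk[OF homog_Vdelta hX]] nonneg_submoduleD(3)[OF M]
    by simp
  then have Xc: "X = mult_embed p (block_at_bottom p X)" by (rule mult_embed_block_at_bottom[OF mX hX])
  have "X (False, - int p) (False, - int p) + X (True, int p) (True, int p) = 0"
    using sp_V_entry[OF Xsp, of "(False, - int p)" "(True, int p)"] Vform_corner by simp
  moreover have "X (True, int p) (True, int p) = X (True, - int p) (True, - int p)"
    by (subst Xc, subst (2) Xc) (simp add: mult_embed_def)
  ultimately have "block_at_bottom p X \<in> sl2_set" by (intro block_at_bottom_sl2) simp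
  then show ?thesis using Xc unfolding Lsl2_def by (metis image_eqI)
qed

theorem lmax_V: "lie_sub V (lmax V Vdeg (Vform p) s) \<and> iso_sl2 V (lmax V Vdeg (Vform p) s)"
  using lmax_eqI[OF Lsl2_nonneg_submodule nonneg_submodule_in_Lsl2] Lsl2_lie_sub Lsl2_iso_sl2
  by simp

end

locale L_setting =
  fixes m :: real and S :: "real \<Rightarrow> real \<Rightarrow> complex" and \<tau> :: "real \<Rightarrow> real \<Rightarrow> complex"
    and s :: "(real \<Rightarrow> real \<Rightarrow> complex) set"
  assumes m_halfodd: "m \<in> halfodd" and m_pos: "m > 0" and S_ok: "Lform_ok m S"
    and \<tau>_ok: "Ltau_ok m \<tau>"
    and graded: "graded_sl2_sub (Lidx m) (\<lambda>i. i) S s" and \<tau>_s: "\<tau> \<in> s"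
begin

abbreviation "L \<equiv> Lidx m"

definition N :: nat where
  "N = nat \<lfloor>2 * m\<rfloor>"

lemma N_eq: "real N = 2 * m"
proof -
  obtain z :: int where "m = of_int z + 1/2" using m_halfodd by (auto simp: halfodd_def)
  moreover have "2 * (of_int z + 1/2 :: real) = of_int (2 * z + 1)" by simp
  ultimately show ?thesis using m_pos unfolding N_def by simp
qed

lemma L_char: "a \<in> L \<longleftrightarrow> (\<exists>k\<le>N. a = - m + real k)"
proof
  assume a: "a \<in> L"
  then obtain i :: int where i: "a = of_int i + 1/2" and ab: "\<bar>a\<bar> \<le> m"
    by (auto simp: Lidx_def halfodd_def)
  obtain z :: int where z: "m = of_int z + 1/2" using m_halfodd by (auto simp: halfodd_def)
  have "i + z + 1 \<ge> 0" "i \<le> z" using ab i z by linarith+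
  then have "a = - m + real (nat (i + z + 1))" "nat (i + z + 1) \<le> N"
    using i z N_eq by auto
  then show "\<exists>k\<le>N. a = - m + real k" by blast
next
  assume "\<exists>k\<le>N. a = - m + real k"
  then obtain k where k: "k \<le> N" "a = - m + real k" by blast
  obtain z :: int where z: "m = of_int z + 1/2" using m_halfodd by (auto simp: halfodd_def)
  have "a = of_int (int k - z - 1) + 1/2" using k z by simp
  then have "a \<in> halfodd" unfolding halfodd_def by blast
  moreover have "\<bar>a\<bar> \<le> m" using k N_eq by (simp add: abs_le_iff)
  ultimately show "a \<in> L" by (simp add: Lidx_def)
qed

lemma L_point: "k \<le> N \<Longrightarrow> - m + real k \<in> L"
  using L_char by blast

lemma finite_L: "finite L"
proof -
  have "L = (\<lambda>k. - m + real k) ` {0..N}" using L_char by auto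
  then show ?thesis by simp
qed

lemma L_bounds: "a \<in> L \<Longrightarrow> - m \<le> a \<and> a \<le> m"
  by (auto simp: Lidx_def abs_le_iff)

lemma L_int_deg:
  assumes "a \<in> L" "b \<in> L"
  shows "b - a \<in> \<int>"
proof -
  obtain k l where "a = - m + real k" "b = - m + real l" using assms L_char by blast
  then have "b - a = of_int (int l - int k)" by simp
  then show ?thesis by (simp only: Ints_of_int)
qed

lemma L_bounded:
  assumes "k > real N" "mat_on L Z" "homog (\<lambda>i. i) k Z"
  shows "Z = mzero"
  unfolding fun_eq_iff mzero_def
proof (intro allI, rule ccontr)
  fix b a assume nz: "Z b a \<noteq> 0"
  have "a \<in> L" "b \<in> L" using mat_onD[OF assms(2) nz] by auto
  moreover have "b = a + k" using assms(3) nz by (simp add: homog_def)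
  ultimately show False using assms(1) N_eq L_bounds[of a] L_bounds[of b] by linarith
qed

lemma m_in_L: "m \<in> L"
  using m_halfodd m_pos by (simp add: Lidx_def)

lemma s_lie: "lie_sub L s"
  using graded_sl2_subD(1)[OF graded] .

lemma s_mat: "Y \<in> s \<Longrightarrow> mat_on L Y"
  using graded_sl2_subD(2)[OF graded] sp_mat_on by blast

lemma mat_\<tau>: "mat_on L \<tau>"
  using \<tau>_ok by (simp add: Ltau_ok_def)

lemma \<tau>_nonzero: "\<tau> b a \<noteq> 0 \<Longrightarrow> b = a - 1"
  using \<tau>_ok by (simp add: Ltau_ok_def)

lemma \<tau>_step: "a \<in> L \<Longrightarrow> a > - m \<Longrightarrow> \<tau> (a - 1) a \<noteq> 0"
  using \<tau>_ok by (simp add: Ltau_ok_def)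

lemma \<tau>_chain: "k < N \<Longrightarrow> \<tau> (- m + real k) (- m + real (Suc k)) \<noteq> 0"
  using \<tau>_step[OF L_point[of "Suc k"]] m_pos by (simp add: algebra_simps)

lemma homog_\<tau>: "homog (\<lambda>i. i) (-1) \<tau>"
  using \<tau>_nonzero by (auto simp: homog_def)

lemma brk_\<tau>: "brk L Y \<tau> b a = Y b (a - 1) * \<tau> (a - 1) a - \<tau> b (b + 1) * Y (b + 1) a"
proof -
  have "(\<Sum>c\<in>L. Y b c * \<tau> c a) = (if a - 1 \<in> L then Y b (a - 1) * \<tau> (a - 1) a else 0)"
    by (rule sum_single[OF finite_L]) (use \<tau>_nonzero in force)
  moreover have "(\<Sum>c\<in>L. \<tau> b c * Y c a) = (if b + 1 \<in> L then \<tau> b (b + 1) * Y (b + 1) a else 0)"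
    by (rule sum_single[OF finite_L]) (use \<tau>_nonzero in force)
  moreover have "a - 1 \<notin> L \<Longrightarrow> \<tau> (a - 1) a = 0" "b + 1 \<notin> L \<Longrightarrow> \<tau> b (b + 1) = 0"
    using mat_onD[OF mat_\<tau>] by blast+
  ultimately show ?thesis by (simp add: brk_def mmul_def)
qed

text \<open>Degree -1: A commutes with tau, so the ratio of the subdiagonals of A and tau is
  constant along the chain.\<close>
lemma degree_minus_one:
  assumes As: "A \<in> s" and hA: "homog (\<lambda>i. i) (-1) A"
  shows "\<exists>r. A = msc r \<tau>"
proof -
  have mA: "mat_on L A" using s_mat[OF As] .
  have A\<tau>: "brk L A \<tau> = mzero"
    using graded_sl2_homog_zero[OF graded lie_sub_brk[OF s_lie As \<tau>_s] homog_brk[OF hA homog_\<tau>]]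
    by simp
  define \<rho> where "\<rho> k = A (- m + real k) (- m + real (Suc k)) / \<tau> (- m + real k) (- m + real (Suc k))"
    for k
  have \<rho>_const: "\<rho> k = \<rho> 0" if "k < N" for k
  proof -
    have "\<rho> k = \<rho> 0 + of_nat k * 0"
    proof (rule arith_progression_nat[of "N - 1"])
      fix k assume k: "k < N - 1"
      let ?a = "- m + real (Suc (Suc k))"
      have "A (?a - 2) (?a - 1) * \<tau> (?a - 1) ?a = \<tau> (?a - 2) (?a - 1) * A (?a - 1) ?a"
        using fun_cong[OF fun_cong[OF A\<tau>, of "?a - 2"], of ?a] unfolding brk_\<tau>
        by (simp add: mzero_def algebra_simps)
      moreover have "\<tau> (?a - 1) ?a \<noteq> 0" "\<tau> (?a - 2) (?a - 1) \<noteq> 0"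
        using \<tau>_chain[of "Suc k"] \<tau>_chain[of k] k by (simp_all add: algebra_simps)
      ultimately show "\<rho> (Suc k) = \<rho> k + 0"
        unfolding \<rho>_def by (simp add: field_simps)
    qed (use that in simp)
    then show ?thesis by simp
  qed
  have "A b a = \<rho> 0 * \<tau> b a" for b a
  proof (cases "b = a - 1 \<and> a \<in> L \<and> a > - m")
    case True
    obtain j where j: "j \<le> N" "a = - m + real j" using True L_char by blast
    with True obtain k where k: "j = Suc k" by (cases j) auto
    have ab: "a = - m + real (Suc k)" "b = - m + real k" using True j k by auto
    show ?thesis using \<rho>_const[of k] \<tau>_chain[of k] j k
      unfolding ab by (simp add: \<rho>_def field_simps)
  next
    case False
    have vanish: "X b a = 0" if mX: "mat_on L X" and hX: "homog (\<lambda>i. i) (-1) X" for X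
    proof (rule ccontr)
      assume nz: "X b a \<noteq> 0"
      then have "b = a - 1" "a \<in> L" "b \<in> L" using hX mat_onD[OF mX nz] by (auto simp: homog_def)
      then show False using False L_bounds[of b] by auto
    qed
    show ?thesis using vanish[OF mA hA] vanish[OF mat_\<tau> homog_\<tau>] by simp
  qed
  then show ?thesis by (auto simp: msc_def fun_eq_iff)
qed

lemma degree_zero_diagonal: "homog (\<lambda>i. i) 0 B \<Longrightarrow> diagonal B"
  by (simp add: homog_def diagonal_def)

end

context L_setting
begin

text \<open>If \<kappa>
  were 0, the subdiagonal of C (weighted by tau) would be a second-difference-free chain
  vanishing at both ends, so C = 0.\<close>
lemma degree_one_bracket:
  assumes Cs: "C \<in> s" and hC: "homog (\<lambda>i. i) 1 C" and C0: "C \<noteq> mzero"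
  obtains \<kappa> where "\<kappa> \<noteq> 0" "brk L (brk L C \<tau>) \<tau> = msc \<kappa> \<tau>"
proof -
  have mC: "mat_on L C" using s_mat[OF Cs] .
  define B0 where "B0 = brk L C \<tau>"
  have B0s: "B0 \<in> s" unfolding B0_def by (rule lie_sub_brk[OF s_lie Cs \<tau>_s])
  have hB0: "homog (\<lambda>i. i) 0 B0" unfolding B0_def using homog_brk[OF hC homog_\<tau>] by simp
  obtain \<kappa> where \<kappa>: "brk L B0 \<tau> = msc \<kappa> \<tau>"
    using degree_minus_one[OF lie_sub_brk[OF s_lie B0s \<tau>_s]] homog_brk[OF hB0 homog_\<tau>] by auto
  have \<beta>_step: "B0 (a - 1) (a - 1) - B0 a a = \<kappa>" if "a \<in> L" "a > - m" for a
  proof -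
    have "(B0 (a - 1) (a - 1) - B0 a a) * \<tau> (a - 1) a = \<kappa> * \<tau> (a - 1) a"
      using fun_cong[OF fun_cong[OF \<kappa>, of "a - 1"], of a] degree_zero_diagonal[OF hB0]
      unfolding brk_\<tau> by (simp add: msc_def algebra_simps)
    then show ?thesis using \<tau>_step[OF that] by simp
  qed
  have "\<kappa> \<noteq> 0"
  proof
    assume "\<kappa> = 0"
    define u where "u a = \<tau> a (a + 1) * C (a + 1) a" for a
    have u_zero: "u (- m + of_int j) = 0" if "-1 \<le> j" "j \<le> int N" for j
    proof -
      have "u (- m + of_int j) = - \<kappa> / 2 * of_int ((int N - j) * (j - 0 + 1))"
      proof (rule second_difference_chain[where \<beta>="\<lambda>j. B0 (- m + of_int j) (- m + of_int j)"
            and g="\<lambda>j. u (- m + of_int j)"])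
        fix j :: int
        show "B0 (- m + of_int j) (- m + of_int j) = u (- m + of_int (j - 1)) - u (- m + of_int j)"
          unfolding B0_def brk_\<tau> u_def by (simp add: algebra_simps)
        assume j: "0 < j" "j \<le> int N"
        have "- m + of_int j \<in> L" using L_point[of "nat j"] j by simp
        moreover have shift: "- m + of_int (j - 1) = (- m + of_int j) - 1" by simp
        ultimately show "B0 (- m + of_int (j - 1)) (- m + of_int (j - 1)) - B0 (- m + of_int j) (- m + of_int j) = \<kappa>"
          unfolding shift using \<beta>_step[of "- m + of_int j"] j by simp
      next
        have "- m - 1 \<notin> L" "m + 1 \<notin> L" using L_bounds[of "- m - 1"] L_bounds[of "m + 1"] by auto
        then have "\<tau> (- m - 1) (- m) = 0" "C (m + 1) m = 0"
          using mat_onD[OF mat_\<tau>, of "- m - 1" "- m"] mat_onD[OF mC, of "m + 1" m] by blast+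
        moreover have "- m + of_int (int N) = m" using N_eq by simp
        ultimately show "u (- m + of_int (0 - 1)) = 0" "u (- m + of_int (int N)) = 0"
          by (simp_all add: u_def)
      qed (use that in simp_all)
      then show ?thesis using \<open>\<kappa> = 0\<close> by simp
    qed
    have "C b a = 0" for b a
    proof (rule ccontr)
      assume nz: "C b a \<noteq> 0"
      then have ba: "b = a + 1" and L: "a \<in> L" "b \<in> L" using hC mat_onD[OF mC nz] by (auto simp: homog_def)
      obtain k where k: "k \<le> N" "a = - m + real k" using L(1) L_char by blast
      have "\<tau> a (a + 1) \<noteq> 0" using \<tau>_step[of "a + 1"] L ba L_bounds[of a] by simp
      moreover have "u a = 0" using u_zero[of "int k"] k by simp
      ultimately show False using nz ba unfolding u_def by simp
    qed
    then show False using C0 by (simp add: mzero_def fun_eq_iff)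
  qed
  then show ?thesis using that \<kappa> unfolding B0_def by blast
qed

text \<open>Normalising the degree-1 element gives e with h = [e, tau] diagonal and growing by 2
  along the chain, i.e. acting on degree-k matrices by 2k.\<close>
lemma raising_operator:
  obtains e h where "e \<in> s" "homog (\<lambda>i. i) 1 e" "brk L e \<tau> = h" "diagonal h"
    "\<And>a b. a \<in> L \<Longrightarrow> b \<in> L \<Longrightarrow> h b b - h a a = complex_of_real (2 * (b - a))"
proof -
  obtain C where C: "C \<in> s" "homog (\<lambda>i. i) 1 C" "C \<noteq> mzero"
    using graded_sl2_has_degree_one[OF graded finite_L \<tau>_s homog_\<tau> degree_minus_one]
      degree_zero_diagonal by blast
  obtain \<kappa> where \<kappa>: "\<kappa> \<noteq> 0" "brk L (brk L C \<tau>) \<tau> = msc \<kappa> \<tau>" using degree_one_bracket[OF C] .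
  define e where "e = msc (- 2 / \<kappa>) C"
  define h where "h = brk L e \<tau>"
  have hh: "homog (\<lambda>i. i) 0 h" unfolding h_def e_def using homog_brk[OF homog_msc[OF C(2)] homog_\<tau>] by simp
  have h\<tau>: "brk L h \<tau> = msc (-2) \<tau>"
    using \<kappa> unfolding h_def e_def brk_msc_left by (simp add: msc_def fun_eq_iff)
  have h_step: "h (- m + real (Suc k)) (- m + real (Suc k)) = h (- m + real k) (- m + real k) + 2"
    if "k < N" for k
  proof -
    let ?a = "- m + real (Suc k)" and ?b = "- m + real k"
    have a: "?a - 1 = ?b" by simp
    have "(h ?b ?b - h ?a ?a) * \<tau> ?b ?a = -2 * \<tau> ?b ?a"
      using fun_cong[OF fun_cong[OF h\<tau>, of ?b], of ?a] degree_zero_diagonal[OF hh]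
      unfolding brk_\<tau> a by (simp add: msc_def algebra_simps)
    then have "h ?b ?b - h ?a ?a = -2"
      by (rule mult_right_cancel[OF \<tau>_chain[OF that], THEN iffD1])
    then show ?thesis by (simp add: algebra_simps)
  qed
  have h_lin: "h (- m + real k) (- m + real k) = h (- m) (- m) + of_nat k * 2" if "k \<le> N" for k
    using arith_progression_nat[where f="\<lambda>k. h (- m + real k) (- m + real k)", OF h_step that] by simp
  have "h b b - h a a = complex_of_real (2 * (b - a))" if ab: "a \<in> L" "b \<in> L" for a b
  proof -
    obtain k l where "k \<le> N" "a = - m + real k" "l \<le> N" "b = - m + real l"
      using ab L_char by meson
    then show ?thesis using h_lin[of k] h_lin[of l] by simp
  qed
  moreover have "e \<in> s" unfolding e_def by (rule lie_sub_msc[OF s_lie C(1)])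
  ultimately show ?thesis
    using that homog_msc[OF C(2)] degree_zero_diagonal[OF hh] unfolding e_def h_def by blast
qed

text \<open>Every nonneg submodule is zero: its elements have degree 0 by the highest weight
  argument, commute with tau, hence are scalar, and sp contains no nonzero scalars.\<close>
lemma nonneg_submodule_zero:
  assumes M: "nonneg_submodule L (\<lambda>i. i) S s M" and XM: "X \<in> M"
  shows "X = mzero"
proof -
  obtain e h where eh: "e \<in> s" "homog (\<lambda>i. i) 1 e" "brk L e \<tau> = h" "diagonal h"
    "\<And>a b. a \<in> L \<Longrightarrow> b \<in> L \<Longrightarrow> h b b - h a a = complex_of_real (2 * (b - a))"
    using raising_operator by blast
  interpret triple: sl2_triple L "\<lambda>i. i" "real N" \<tau> e h
    by (rule sl2_triple.intro[OF finite_L L_int_deg L_bounded mat_\<tau> s_mat[OF eh(1)] homog_\<tau> eh(2)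
          eh(3) brk_weight_diagonal[OF finite_L eh(4) eh(5)]])
  have closed: "mat_on L Y \<and> nonneg (\<lambda>i. i) Y \<and> brk L \<tau> Y \<in> M \<and> brk L e Y \<in> M" if "Y \<in> M" for Y
    using nonneg_submoduleD[OF M that] \<tau>_s eh(1) by blast
  have hX: "homog (\<lambda>i. i) 0 X" by (rule triple.degree_zero_of_nonneg_submodule[OF closed XM])
  have mX: "mat_on L X" and Xsp: "X \<in> sp_set L S" using nonneg_submoduleD[OF M XM] by auto
  have "brk L \<tau> X \<in> M" using nonneg_submoduleD(4)[OF M XM \<tau>_s] .
  then have "brk L \<tau> X = mzero"
    using nonneg_homog_neg_zero[OF homog_brk[OF homog_\<tau> hX]] nonneg_submoduleD(3)[OF M] by simp
  then have X\<tau>: "brk L X \<tau> = mzero" using brk_antisym[of L X \<tau>] by simp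
  have dX: "diagonal X" using degree_zero_diagonal[OF hX] .
  have X_step: "X (- m + real (Suc k)) (- m + real (Suc k)) = X (- m + real k) (- m + real k) + 0"
    if "k < N" for k
  proof -
    let ?a = "- m + real (Suc k)" and ?b = "- m + real k"
    have a: "?a - 1 = ?b" by simp
    have "(X ?b ?b - X ?a ?a) * \<tau> ?b ?a = 0"
      using fun_cong[OF fun_cong[OF X\<tau>, of ?b], of ?a]
      unfolding brk_\<tau> a by (simp add: mzero_def algebra_simps)
    then show ?thesis using \<tau>_chain[OF that] by simp
  qed
  have scalar: "X a a = X (- m) (- m)" if aL: "a \<in> L" for a
  proof -
    obtain k where k: "k \<le> N" "a = - m + real k" using aL L_char by blast
    have "X (- m + real k) (- m + real k) = X (- m + real 0) (- m + real 0) + of_nat k * 0"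
      by (rule arith_progression_nat[where f="\<lambda>k. X (- m + real k) (- m + real k)", OF X_step k(1)])
    then show ?thesis unfolding k(2) by simp
  qed
  have "X (- m) (- m) = 0"
    using sp_scalar_zero[OF finite_L _ m_in_L Xsp dX scalar] S_ok by (simp add: Lform_ok_def)
  then have "X b a = 0" for b a
  proof (cases "b = a \<and> a \<in> L")
    case False
    then show ?thesis using dX mat_onD[OF mX, of b a] unfolding diagonal_def by blast
  qed (use scalar in simp)
  then show ?thesis by (simp add: mzero_def fun_eq_iff)
qed

theorem lmax_L: "lmax L (\<lambda>i. i) S s = {mzero}"
proof (rule lmax_eqI)
  have "msubspace L {mzero}" "mzero \<in> sp_set L S" "nonneg (\<lambda>i. i) mzero"
    by (simp_all add: msubspace_def sp_set_def nonneg_def mat_on_def mzero_def madd_def msc_def fun_eq_iff)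
  then show "nonneg_submodule L (\<lambda>i. i) S s {mzero}"
    by (simp add: nonneg_submodule_def)
qed (use nonneg_submodule_zero in blast)

end

theorem mainTheorem14:
  shows "(\<forall>(p::nat) s.
            graded_sl2_sub (Vidx p) Vdeg (Vform p) s \<and> Vdelta p \<in> s \<and>
            irreducible_sub (Vidx p) s (Espace p) \<and> irreducible_sub (Vidx p) s (Fspace p) \<longrightarrow>
            lie_sub (Vidx p) (lmax (Vidx p) Vdeg (Vform p) s) \<and>
            iso_sl2 (Vidx p) (lmax (Vidx p) Vdeg (Vform p) s)) \<and>
         (\<forall>(m::real) S \<tau> s.
            m \<in> halfodd \<and> m > 0 \<and> Lform_ok m S \<and> Ltau_ok m \<tau> \<and> \<tau> \<in> sp_set (Lidx m) S \<and>
            graded_sl2_sub (Lidx m) (\<lambda>i. i) S s \<and> \<tau> \<in> s \<and>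
            irreducible_sub (Lidx m) s {v. \<forall>a. a \<notin> Lidx m \<longrightarrow> v a = 0} \<longrightarrow>
            lmax (Lidx m) (\<lambda>i. i) S s = {mzero})"
proof (intro conjI allI impI)
  fix p s
  assume "graded_sl2_sub (Vidx p) Vdeg (Vform p) s \<and> Vdelta p \<in> s \<and>
    irreducible_sub (Vidx p) s (Espace p) \<and> irreducible_sub (Vidx p) s (Fspace p)"
  then have "V_setting p s" by unfold_locales (auto simp: irreducible_sub_def)
  then show "lie_sub (Vidx p) (lmax (Vidx p) Vdeg (Vform p) s)"
    and "iso_sl2 (Vidx p) (lmax (Vidx p) Vdeg (Vform p) s)"
    using V_setting.lmax_V by blast+
next
  fix m :: real and S \<tau> s
  assume "m \<in> halfodd \<and> m > 0 \<and> Lform_ok m S \<and> Ltau_ok m \<tau> \<and> \<tau> \<in> sp_set (Lidx m) S \<and>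
    graded_sl2_sub (Lidx m) (\<lambda>i. i) S s \<and> \<tau> \<in> s \<and>
    irreducible_sub (Lidx m) s {v. \<forall>a. a \<notin> Lidx m \<longrightarrow> v a = 0}"
  then have "L_setting m S \<tau> s" by unfold_locales auto
  then show "lmax (Lidx m) (\<lambda>i. i) S s = {mzero}" by (rule L_setting.lmax_L)
qed

end
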